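(* Let $(V_1,\dots,V_n)$ be an $n$-tuple of doubly non-commuting isometries on a Hilbert space $H$. Then there exist a Hilbert space $\mathcal K\supseteq H$, with orthogonal projection $P_H:\mathcal K\to H$, and unitary operators $\mathcal U_1,\dots,\mathcal U_n$ on $\mathcal K$ such that: (1) $(\mathcal U_1,\dots,\mathcal U_n)$ is an $n$-tuple of doubly non-commuting isometries (with the same structure constants); (2) $\mathcal U_1,\dots,\mathcal U_n$ leave $H$ invariant; (3) $\mathcal U_i|_H=V_i$ for $i=1,\dots,n$; (4) $V_i^*=(P_H\circ\mathcal U_i^* )|_H$ for $i=1,\dots,n$.
   Context: Fix $n\ge1$ and $z_{ij}\in\mathbb T$ for $i\ne j$ in $\{1,\dots,n\}$ with $z_{ji}=\overline{z_{ij}}$. An $n$-tuple $(V_1,\dots,V_n)$ of isometries on a Hilbert space is doubly non-commuting if $V_i^*V_j=\overline{z_{ij}}V_jV_i^*$ for all $i\neq j$. *)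

theory Defs
  imports Complex_Main
begin

text \<open>A complex Hilbert space, given relative to a carrier set together with its
  vector-space operations and its inner product (linear in the first argument,
  conjugate-linear in the second).\<close>

record 'a hspace =
  hcarrier :: "'a set"
  hzero    :: "'a"
  hadd     :: "'a \<Rightarrow> 'a \<Rightarrow> 'a"
  hscale   :: "complex \<Rightarrow> 'a \<Rightarrow> 'a"
  hinner   :: "'a \<Rightarrow> 'a \<Rightarrow> complex"

definition hsub :: "'a hspace \<Rightarrow> 'a \<Rightarrow> 'a \<Rightarrow> 'a" where
  "hsub X x y = hadd X x (hscale X (-1) y)"

definition hnorm :: "'a hspace \<Rightarrow> 'a \<Rightarrow> real" where
  "hnorm X x = sqrt (Re (hinner X x x))"

definition hilbert_space :: "'a hspace \<Rightarrow> bool" where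
  "hilbert_space X \<longleftrightarrow>
     (let C = hcarrier X in
      hzero X \<in> C \<and>
      (\<forall>x\<in>C. \<forall>y\<in>C. hadd X x y \<in> C) \<and>
      (\<forall>a. \<forall>x\<in>C. hscale X a x \<in> C) \<and>
      (\<forall>x\<in>C. \<forall>y\<in>C. \<forall>z\<in>C. hadd X (hadd X x y) z = hadd X x (hadd X y z)) \<and>
      (\<forall>x\<in>C. \<forall>y\<in>C. hadd X x y = hadd X y x) \<and>
      (\<forall>x\<in>C. hadd X x (hzero X) = x) \<and>
      (\<forall>x\<in>C. hadd X x (hscale X (-1) x) = hzero X) \<and>
      (\<forall>a b. \<forall>x\<in>C. hscale X a (hscale X b x) = hscale X (a * b) x) \<and>
      (\<forall>x\<in>C. hscale X 1 x = x) \<and>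
      (\<forall>a. \<forall>x\<in>C. \<forall>y\<in>C. hscale X a (hadd X x y) = hadd X (hscale X a x) (hscale X a y)) \<and>
      (\<forall>a b. \<forall>x\<in>C. hscale X (a + b) x = hadd X (hscale X a x) (hscale X b x)) \<and>
      (\<forall>x\<in>C. \<forall>y\<in>C. hinner X x y = cnj (hinner X y x)) \<and>
      (\<forall>x\<in>C. \<forall>y\<in>C. \<forall>z\<in>C. hinner X (hadd X x y) z = hinner X x z + hinner X y z) \<and>
      (\<forall>a. \<forall>x\<in>C. \<forall>y\<in>C. hinner X (hscale X a x) y = a * hinner X x y) \<and>
      (\<forall>x\<in>C. Im (hinner X x x) = 0 \<and> Re (hinner X x x) \<ge> 0) \<and>
      (\<forall>x\<in>C. hinner X x x = 0 \<longrightarrow> x = hzero X) \<and>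
      \<comment> \<open>completeness\<close>
      (\<forall>f::nat \<Rightarrow> 'a. (\<forall>k. f k \<in> C) \<longrightarrow>
          (\<forall>e>0. \<exists>N. \<forall>m\<ge>N. \<forall>k\<ge>N. hnorm X (hsub X (f m) (f k)) < e) \<longrightarrow>
          (\<exists>l\<in>C. (\<lambda>k. hnorm X (hsub X (f k) l)) \<longlonglongrightarrow> 0)))"

definition bounded_op :: "'a hspace \<Rightarrow> ('a \<Rightarrow> 'a) \<Rightarrow> bool" where
  "bounded_op X T \<longleftrightarrow>
     (\<forall>x\<in>hcarrier X. T x \<in> hcarrier X) \<and>
     (\<forall>x\<in>hcarrier X. \<forall>y\<in>hcarrier X. T (hadd X x y) = hadd X (T x) (T y)) \<and>
     (\<forall>a. \<forall>x\<in>hcarrier X. T (hscale X a x) = hscale X a (T x)) \<and>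
     (\<exists>c. \<forall>x\<in>hcarrier X. hnorm X (T x) \<le> c * hnorm X x)"

definition adj :: "'a hspace \<Rightarrow> ('a \<Rightarrow> 'a) \<Rightarrow> 'a \<Rightarrow> 'a" where
  "adj X T y = (THE z. z \<in> hcarrier X \<and> (\<forall>x\<in>hcarrier X. hinner X (T x) y = hinner X x z))"

definition isometry_op :: "'a hspace \<Rightarrow> ('a \<Rightarrow> 'a) \<Rightarrow> bool" where
  "isometry_op X T \<longleftrightarrow> bounded_op X T \<and> (\<forall>x\<in>hcarrier X. adj X T (T x) = x)"

definition unitary_op :: "'a hspace \<Rightarrow> ('a \<Rightarrow> 'a) \<Rightarrow> bool" where
  "unitary_op X T \<longleftrightarrow> bounded_op X T \<and>
     (\<forall>x\<in>hcarrier X. adj X T (T x) = x) \<and> (\<forall>x\<in>hcarrier X. T (adj X T x) = x)"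

definition doubly_noncommuting ::
  "'a hspace \<Rightarrow> nat \<Rightarrow> (nat \<Rightarrow> nat \<Rightarrow> complex) \<Rightarrow> (nat \<Rightarrow> 'a \<Rightarrow> 'a) \<Rightarrow> bool" where
  "doubly_noncommuting X n z V \<longleftrightarrow>
     (\<forall>i\<in>{1..n}. isometry_op X (V i)) \<and>
     (\<forall>i\<in>{1..n}. \<forall>j\<in>{1..n}. i \<noteq> j \<longrightarrow>
        (\<forall>x\<in>hcarrier X. adj X (V i) (V j x) = hscale X (cnj (z i j)) (V j (adj X (V i) x))))"

text \<open>Isometric linear embedding J of H into K (identifying H with the subspace J(H) of K).\<close>
definition hembedding :: "'a hspace \<Rightarrow> 'b hspace \<Rightarrow> ('a \<Rightarrow> 'b) \<Rightarrow> bool" where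
  "hembedding H K J \<longleftrightarrow>
     (\<forall>x\<in>hcarrier H. J x \<in> hcarrier K) \<and>
     (\<forall>x\<in>hcarrier H. \<forall>y\<in>hcarrier H. J (hadd H x y) = hadd K (J x) (J y)) \<and>
     (\<forall>a. \<forall>x\<in>hcarrier H. J (hscale H a x) = hscale K a (J x)) \<and>
     (\<forall>x\<in>hcarrier H. \<forall>y\<in>hcarrier H. hinner K (J x) (J y) = hinner H x y)"

definition orth_proj :: "'a hspace \<Rightarrow> 'b hspace \<Rightarrow> ('a \<Rightarrow> 'b) \<Rightarrow> ('b \<Rightarrow> 'a) \<Rightarrow> bool" where
  "orth_proj H K J P \<longleftrightarrow>
     (\<forall>k\<in>hcarrier K. P k \<in> hcarrier H \<and>
        (\<forall>h\<in>hcarrier H. hinner K (hsub K k (J (P k))) (J h) = 0))"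

end

(*
  The unitary extension lives on square-summable families indexed by multi-indices m in N^n:
  the coordinate at m ranges over the joint kernel of the V_j^* with m_j > 0, and H is the
  coordinate at the origin.  U_i moves the coordinate at m + e_i down to m and, on coordinates with
  m_i = 0, adds V_i applied to the coordinate itself; its adjoint splits y = V_i V_i^* y + D_i y with
  the defect projection D_i = 1 - V_i V_i^*.  That U_i is unitary, leaves H invariant and compresses
  to V_i^* are coordinatewise computations; the relations U_i^* U_j = conj(z_ij) U_j U_i^* hold
  because every step in direction i is weighted with a product of powers of the z_ki.
  Since the Hilbert spaces are abstract, the adjoints V_i^* rest on the Riesz representation
  theorem, and completeness of the extension space on that of H.
*)

theory Submission
  imports Defs "HOL-Analysis.Infinite_Sum" "HOL-Analysis.Elementary_Normed_Spaces"
    "HOL-Library.Countable_Set"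
begin

section \<open>Hilbert spaces given by a carrier\<close>

locale hilbert =
  fixes X :: "'a hspace"
  assumes hilbert_space: "hilbert_space X"
begin

abbreviation "C \<equiv> hcarrier X"
abbreviation "vzero \<equiv> hzero X"
abbreviation "vadd \<equiv> hadd X"
abbreviation "vscale \<equiv> hscale X"
abbreviation "vinner \<equiv> hinner X"
abbreviation "vsub \<equiv> hsub X"

definition sqnorm :: "'a \<Rightarrow> real" where "sqnorm x = Re (vinner x x)"

lemma
  shows vzero_closed [simp]: "vzero \<in> C"
    and vadd_closed [simp, rule_format]: "\<forall>x\<in>C. \<forall>y\<in>C. vadd x y \<in> C"
    and vscale_closed [simp, rule_format]: "\<forall>a. \<forall>x\<in>C. vscale a x \<in> C"
    and vadd_assoc [rule_format]:
      "\<forall>x\<in>C. \<forall>y\<in>C. \<forall>z\<in>C. vadd (vadd x y) z = vadd x (vadd y z)"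
    and vadd_commute [rule_format]: "\<forall>x\<in>C. \<forall>y\<in>C. vadd x y = vadd y x"
    and vadd_zero [simp, rule_format]: "\<forall>x\<in>C. vadd x vzero = x"
    and vadd_neg [rule_format]: "\<forall>x\<in>C. vadd x (vscale (-1) x) = vzero"
    and vscale_vscale [simp, rule_format]:
      "\<forall>a b. \<forall>x\<in>C. vscale a (vscale b x) = vscale (a * b) x"
    and vscale_one [simp, rule_format]: "\<forall>x\<in>C. vscale 1 x = x"
    and vscale_vadd [rule_format]:
      "\<forall>a. \<forall>x\<in>C. \<forall>y\<in>C. vscale a (vadd x y) = vadd (vscale a x) (vscale a y)"
    and vscale_add_left [rule_format]:
      "\<forall>a b. \<forall>x\<in>C. vscale (a + b) x = vadd (vscale a x) (vscale b x)"
    and vinner_commute [rule_format]: "\<forall>x\<in>C. \<forall>y\<in>C. vinner x y = cnj (vinner y x)"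
    and vinner_add_left [simp, rule_format]:
      "\<forall>x\<in>C. \<forall>y\<in>C. \<forall>z\<in>C. vinner (vadd x y) z = vinner x z + vinner y z"
    and vinner_scale_left [simp, rule_format]:
      "\<forall>a. \<forall>x\<in>C. \<forall>y\<in>C. vinner (vscale a x) y = a * vinner x y"
    and vinner_self_nonneg [rule_format]:
      "\<forall>x\<in>C. Im (vinner x x) = 0 \<and> Re (vinner x x) \<ge> 0"
    and vinner_self_eq_zero [rule_format]: "\<forall>x\<in>C. vinner x x = 0 \<longrightarrow> x = vzero"
    and complete [rule_format]: "\<forall>f::nat \<Rightarrow> 'a. (\<forall>k. f k \<in> C) \<longrightarrow>
          (\<forall>e>0. \<exists>N. \<forall>m\<ge>N. \<forall>k\<ge>N. hnorm X (vsub (f m) (f k)) < e) \<longrightarrow>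
          (\<exists>l\<in>C. (\<lambda>k. hnorm X (vsub (f k) l)) \<longlonglongrightarrow> 0)"
  by (insert hilbert_space[unfolded hilbert_space_def Let_def], (elim conjE; assumption)+)

lemma vneg_add: "x \<in> C \<Longrightarrow> vadd (vscale (-1) x) x = vzero"
  using vadd_commute[of x "vscale (-1) x"] vadd_neg[of x] by simp

lemma vadd_left_cancel:
  assumes "x \<in> C" "y \<in> C" "w \<in> C" "vadd x y = vadd x w" shows "y = w"
proof -
  have "vadd (vscale (-1) x) (vadd x y) = vadd (vscale (-1) x) (vadd x w)" using assms by simp
  then have "vadd (vadd (vscale (-1) x) x) y = vadd (vadd (vscale (-1) x) x) w"
    using assms by (simp add: vadd_assoc)
  then have "vadd vzero y = vadd vzero w" using assms vneg_add by simp
  then show ?thesis using assms vadd_commute[of vzero y] vadd_commute[of vzero w] by simp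
qed

lemma vzero_add [simp]: "x \<in> C \<Longrightarrow> vadd vzero x = x"
  using vadd_commute[of vzero x] by simp

lemma vscale_zero_left [simp]:
  assumes "x \<in> C" shows "vscale 0 x = vzero"
proof -
  have "vadd (vscale 0 x) (vscale 0 x) = vadd (vscale 0 x) vzero"
    using assms vscale_add_left[of x 0 0] by simp
  then show ?thesis using assms vadd_left_cancel vscale_closed vzero_closed by blast
qed

lemma vscale_zero_right [simp]: "vscale a vzero = vzero"
  using vscale_vscale[of vzero a 0] vscale_zero_left[of vzero] by simp

lemma vinner_zero_left [simp]: "y \<in> C \<Longrightarrow> vinner vzero y = 0"
  using vinner_scale_left[of vzero y 0] by simp

lemma vinner_add_right [simp]:
  "x \<in> C \<Longrightarrow> y \<in> C \<Longrightarrow> w \<in> C \<Longrightarrow> vinner w (vadd x y) = vinner w x + vinner w y"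
  using vinner_commute[of w "vadd x y"] vinner_commute[of w x] vinner_commute[of w y]
    vinner_add_left[of x y w] by simp

lemma vinner_scale_right [simp]:
  "x \<in> C \<Longrightarrow> y \<in> C \<Longrightarrow> vinner y (vscale a x) = cnj a * vinner y x"
  using vinner_commute[of y "vscale a x"] vinner_commute[of y x] vinner_scale_left[of x y a] by simp

lemma vinner_zero_right [simp]: "y \<in> C \<Longrightarrow> vinner y vzero = 0"
  using vinner_commute[of y vzero] by simp

lemma vinner_self: "x \<in> C \<Longrightarrow> vinner x x = complex_of_real (sqnorm x)"
  using vinner_self_nonneg[of x] unfolding sqnorm_def by (simp add: complex_eq_iff)

lemma sqnorm_nonneg [simp]: "x \<in> C \<Longrightarrow> sqnorm x \<ge> 0"
  using vinner_self_nonneg sqnorm_def by auto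

lemma sqnorm_eq_zero_iff: "x \<in> C \<Longrightarrow> sqnorm x = 0 \<longleftrightarrow> x = vzero"
  using vinner_self vinner_self_eq_zero by fastforce

lemma sqnorm_pos: "x \<in> C \<Longrightarrow> x \<noteq> vzero \<Longrightarrow> sqnorm x > 0"
  using sqnorm_eq_zero_iff[of x] sqnorm_nonneg[of x] by linarith

lemma sqnorm_zero [simp]: "sqnorm vzero = 0"
  by (simp add: sqnorm_def)

lemma hnorm_eq_sqrt_sqnorm: "hnorm X x = sqrt (sqnorm x)"
  by (simp add: hnorm_def sqnorm_def)

lemma vsub_closed [simp]: "x \<in> C \<Longrightarrow> y \<in> C \<Longrightarrow> vsub x y \<in> C"
  by (simp add: hsub_def)

lemma vinner_sub_left [simp]:
  "x \<in> C \<Longrightarrow> y \<in> C \<Longrightarrow> w \<in> C \<Longrightarrow> vinner (vsub x y) w = vinner x w - vinner y w"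
  by (simp add: hsub_def)

lemma vinner_sub_right [simp]:
  "x \<in> C \<Longrightarrow> y \<in> C \<Longrightarrow> w \<in> C \<Longrightarrow> vinner w (vsub x y) = vinner w x - vinner w y"
  by (simp add: hsub_def)

lemma vsub_self [simp]: "x \<in> C \<Longrightarrow> vsub x x = vzero"
  by (simp add: hsub_def vadd_neg)

lemma vsub_eq_zero_imp_eq:
  assumes "x \<in> C" "y \<in> C" "vsub x y = vzero" shows "x = y"
proof -
  have "vadd (vadd x (vscale (-1) y)) y = vadd vzero y" using assms by (simp add: hsub_def)
  then have "vadd x (vadd (vscale (-1) y) y) = y" using assms by (simp add: vadd_assoc)
  then show ?thesis using assms vneg_add by simp
qed

lemma vec_eqI:
  assumes "x \<in> C" "y \<in> C" "\<And>w. w \<in> C \<Longrightarrow> vinner x w = vinner y w" shows "x = y"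
proof -
  have "vinner (vsub x y) (vsub x y) = 0" using assms by simp
  then show ?thesis using assms vinner_self_eq_zero vsub_eq_zero_imp_eq vsub_closed by blast
qed

lemma vec_eqI':
  assumes "x \<in> C" "y \<in> C" "\<And>w. w \<in> C \<Longrightarrow> vinner w x = vinner w y" shows "x = y"
proof (rule vec_eqI[OF assms(1,2)])
  fix w assume w: "w \<in> C"
  have "vinner x w = cnj (vinner w x)" using vinner_commute[of x w] w assms by blast
  also have "\<dots> = cnj (vinner w y)" using assms(3) w by simp
  also have "\<dots> = vinner y w" using vinner_commute[of y w] w assms by simp
  finally show "vinner x w = vinner y w" .
qed

lemma sqnorm_add: "x \<in> C \<Longrightarrow> y \<in> C \<Longrightarrow> sqnorm (vadd x y) = sqnorm x + sqnorm y + 2 * Re (vinner x y)"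
  unfolding sqnorm_def using vinner_commute[of y x] by simp

lemma sqnorm_scale:
  assumes "x \<in> C" shows "sqnorm (vscale a x) = (cmod a)^2 * sqnorm x"
proof -
  have "vinner (vscale a x) (vscale a x) = (a * cnj a) * vinner x x"
    using assms by simp
  also have "\<dots> = of_real ((cmod a)^2) * of_real (sqnorm x)"
    by (metis complex_norm_square vinner_self assms)
  finally show ?thesis by (simp add: sqnorm_def)
qed

lemma sqnorm_sub_commute: "x \<in> C \<Longrightarrow> y \<in> C \<Longrightarrow> sqnorm (vsub x y) = sqnorm (vsub y x)"
  unfolding sqnorm_def by (simp add: algebra_simps)

lemma sqnorm_sub_component:
  assumes "w \<in> C" "m \<in> C" "m \<noteq> vzero"
  shows "sqnorm (vsub w (vscale (vinner w m / sqnorm m) m)) = sqnorm w - (cmod (vinner w m))^2 / sqnorm m"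
proof -
  have pos: "sqnorm m > 0" using assms sqnorm_pos by blast
  define a where "a = vinner w m"
  define t where "t = a / sqnorm m"
  have ma: "vinner m w = cnj a" using assms vinner_commute a_def by blast
  have "vinner (vsub w (vscale t m)) (vsub w (vscale t m))
      = vinner w w - cnj t * a - t * cnj a + t * cnj t * vinner m m"
    using assms ma a_def by (simp add: algebra_simps)
  also have "\<dots> = sqnorm w - (cmod a)^2 / sqnorm m"
    using pos vinner_self[OF assms(1)] vinner_self[OF assms(2)]
    unfolding t_def by (simp add: complex_norm_square[symmetric] field_simps power2_eq_square)
  finally show ?thesis unfolding sqnorm_def t_def a_def by simp
qed

lemma cauchy_schwarz:
  assumes "x \<in> C" "y \<in> C" shows "(cmod (vinner x y))^2 \<le> sqnorm x * sqnorm y"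
proof (cases "y = vzero")
  case False
  have "0 \<le> sqnorm (vsub x (vscale (vinner x y / sqnorm y) y))" using assms by simp
  then show ?thesis
    using sqnorm_sub_component[OF assms False] sqnorm_pos[OF assms(2) False]
    by (simp add: field_simps)
qed (use assms in simp)

lemma cauchy_schwarz_sqrt:
  "x \<in> C \<Longrightarrow> y \<in> C \<Longrightarrow> cmod (vinner x y) \<le> sqrt (sqnorm x) * sqrt (sqnorm y)"
  using cauchy_schwarz real_le_rsqrt by (metis real_sqrt_mult)

lemma cauchy_schwarz_mean:
  assumes "x \<in> C" "y \<in> C" shows "cmod (vinner x y) \<le> (sqnorm x + sqnorm y) / 2"
  using cauchy_schwarz_sqrt[OF assms] arith_geo_mean_sqrt[of "sqnorm x" "sqnorm y"] assms
  by (simp add: real_sqrt_mult)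

lemma sqnorm_add_le: "x \<in> C \<Longrightarrow> y \<in> C \<Longrightarrow> sqnorm (vadd x y) \<le> 2 * sqnorm x + 2 * sqnorm y"
  using sqnorm_add cauchy_schwarz_mean complex_Re_le_cmod[of "vinner x y"] by fastforce

lemma norm_triangle:
  assumes "x \<in> C" "y \<in> C" shows "sqrt (sqnorm (vadd x y)) \<le> sqrt (sqnorm x) + sqrt (sqnorm y)"
proof -
  have "sqnorm (vadd x y) \<le> (sqrt (sqnorm x) + sqrt (sqnorm y))^2"
    using sqnorm_add[OF assms] cauchy_schwarz_sqrt[OF assms] complex_Re_le_cmod[of "vinner x y"] assms
    by (simp add: power2_eq_square algebra_simps)
  then show ?thesis using assms by (intro real_le_lsqrt) simp_all
qed

definition converges :: "(nat \<Rightarrow> 'a) \<Rightarrow> 'a \<Rightarrow> bool" where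
  "converges f l \<longleftrightarrow> (\<lambda>k. sqnorm (vsub (f k) l)) \<longlonglongrightarrow> 0"

definition closed_subspace :: "'a set \<Rightarrow> bool" where
  "closed_subspace M \<longleftrightarrow> M \<subseteq> C \<and> vzero \<in> M \<and> (\<forall>x\<in>M. \<forall>y\<in>M. vadd x y \<in> M) \<and>
     (\<forall>a. \<forall>x\<in>M. vscale a x \<in> M) \<and>
     (\<forall>f l. (\<forall>k. f k \<in> M) \<longrightarrow> l \<in> C \<longrightarrow> converges f l \<longrightarrow> l \<in> M)"

lemma closed_subspaceI:
  assumes "M \<subseteq> C" "vzero \<in> M" "\<And>x y. x \<in> M \<Longrightarrow> y \<in> M \<Longrightarrow> vadd x y \<in> M"
    "\<And>a x. x \<in> M \<Longrightarrow> vscale a x \<in> M"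
    "\<And>f l. (\<And>k. f k \<in> M) \<Longrightarrow> l \<in> C \<Longrightarrow> converges f l \<Longrightarrow> l \<in> M"
  shows "closed_subspace M"
  using assms unfolding closed_subspace_def by blast

lemma
  assumes "closed_subspace M"
  shows closed_subspace_subset: "M \<subseteq> C"
    and closed_subspace_zero: "vzero \<in> M"
    and closed_subspace_add [rule_format]: "\<forall>x\<in>M. \<forall>y\<in>M. vadd x y \<in> M"
    and closed_subspace_scale [rule_format]: "\<forall>a. \<forall>x\<in>M. vscale a x \<in> M"
    and closed_subspace_limit [rule_format]:
      "\<forall>f l. (\<forall>k. f k \<in> M) \<longrightarrow> l \<in> C \<longrightarrow> converges f l \<longrightarrow> l \<in> M"
  by (insert assms[unfolded closed_subspace_def], (elim conjE; assumption)+)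

lemma cauchy_converges:
  assumes f: "\<And>k. f k \<in> C"
    and cauchy: "\<And>e. e > 0 \<Longrightarrow> \<exists>N. \<forall>m\<ge>N. \<forall>k\<ge>N. sqnorm (vsub (f m) (f k)) < e"
  shows "\<exists>l\<in>C. converges f l"
proof -
  have "\<exists>N. \<forall>m\<ge>N. \<forall>k\<ge>N. hnorm X (vsub (f m) (f k)) < e" if e: "e > 0" for e
  proof -
    obtain N where N: "\<forall>m\<ge>N. \<forall>k\<ge>N. sqnorm (vsub (f m) (f k)) < e^2"
      using cauchy[of "e^2"] e by auto
    have "hnorm X (vsub (f m) (f k)) < e" if "m \<ge> N" "k \<ge> N" for m k
    proof -
      have "sqrt (sqnorm (vsub (f m) (f k))) < sqrt (e^2)"
        using N that by (intro real_sqrt_less_mono) blast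
      then show ?thesis unfolding hnorm_eq_sqrt_sqnorm using e by simp
    qed
    then show ?thesis by blast
  qed
  then obtain l where l: "l \<in> C" "(\<lambda>k. hnorm X (vsub (f k) l)) \<longlonglongrightarrow> 0"
    using complete f by blast
  have "(\<lambda>k. (hnorm X (vsub (f k) l))^2) \<longlonglongrightarrow> 0^2" by (intro tendsto_power l)
  moreover have "(hnorm X (vsub (f k) l))^2 = sqnorm (vsub (f k) l)" for k
    unfolding hnorm_eq_sqrt_sqnorm using f l by simp
  ultimately show ?thesis using l unfolding converges_def by auto
qed

lemma norm_reverse_triangle:
  assumes "a \<in> C" "b \<in> C" "c \<in> C"
  shows "\<bar>sqrt (sqnorm (vsub a b)) - sqrt (sqnorm (vsub a c))\<bar> \<le> sqrt (sqnorm (vsub b c))"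
proof -
  have "vsub a c = vadd (vsub a b) (vsub b c)" "vsub a b = vadd (vsub a c) (vsub c b)"
    using assms by (auto intro!: vec_eqI simp: algebra_simps)
  then show ?thesis
    using norm_triangle[of "vsub a b" "vsub b c"] norm_triangle[of "vsub a c" "vsub c b"]
      sqnorm_sub_commute[of b c] assms by simp
qed

lemma converges_sqnorm_sub:
  assumes "converges h l" "\<And>q. h q \<in> C" "l \<in> C" "a \<in> C"
  shows "(\<lambda>q. sqnorm (vsub a (h q))) \<longlonglongrightarrow> sqnorm (vsub a l)"
proof -
  have "(\<lambda>q. sqrt (sqnorm (vsub a (h q))) - sqrt (sqnorm (vsub a l))) \<longlonglongrightarrow> 0"
  proof (rule Lim_null_comparison)
    show "\<forall>\<^sub>F q in sequentially.
        norm (sqrt (sqnorm (vsub a (h q))) - sqrt (sqnorm (vsub a l))) \<le> sqrt (sqnorm (vsub (h q) l))"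
      using norm_reverse_triangle assms by simp
    show "(\<lambda>q. sqrt (sqnorm (vsub (h q) l))) \<longlonglongrightarrow> 0"
      using assms(1) unfolding converges_def by (metis real_sqrt_zero tendsto_real_sqrt)
  qed
  then have "(\<lambda>q. (sqrt (sqnorm (vsub a (h q))))^2) \<longlonglongrightarrow> (sqrt (sqnorm (vsub a l)))^2"
    by (intro tendsto_power) (simp add: LIM_zero_iff)
  then show ?thesis using assms by simp
qed

lemma parallelogram_midpoint:
  assumes "x \<in> C" "a \<in> C" "b \<in> C"
  shows "sqnorm (vsub a b) + 4 * sqnorm (vsub x (vscale (1/2) (vadd a b)))
    = 2 * sqnorm (vsub x a) + 2 * sqnorm (vsub x b)"
proof -
  have "vinner (vsub a b) (vsub a b)
      + 4 * vinner (vsub x (vscale (1/2) (vadd a b))) (vsub x (vscale (1/2) (vadd a b)))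
     = 2 * vinner (vsub x a) (vsub x a) + 2 * vinner (vsub x b) (vsub x b)"
    using assms by (simp add: algebra_simps)
  from arg_cong[where f = Re, OF this] show ?thesis unfolding sqnorm_def by simp
qed

text \<open>By the parallelogram law, points whose distances to \<open>x\<close> approach the infimum \<open>d\<close>
  over a convex set are close to each other.\<close>
lemma minimizing_sequence_converges:
  assumes x: "x \<in> C" and f: "\<And>k. f k \<in> C"
    and midpoint: "\<And>k l. d \<le> sqnorm (vsub x (vscale (1/2) (vadd (f k) (f l))))"
    and minimizing: "\<And>k. sqnorm (vsub x (f k)) < d + 1 / (real k + 1)"
  shows "\<exists>l\<in>C. converges f l"
proof (rule cauchy_converges[OF f])
  fix e :: real assume e: "e > 0"
  obtain N :: nat where N: "4 / e < real N" using reals_Archimedean2 by blast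
  have small: "2 / (real j + 1) < e / 2" if "j \<ge> N" for j
  proof -
    have "4 < e * real N" using N e by (simp add: field_simps)
    also have "\<dots> \<le> e * (real j + 1)" using that e by (simp add: mult_left_mono)
    finally show ?thesis using e by (simp add: field_simps)
  qed
  have "sqnorm (vsub (f m) (f k)) < e" if "m \<ge> N" "k \<ge> N" for m k
    using parallelogram_midpoint[OF x f f, of m k] midpoint[of m k] minimizing[of m]
      minimizing[of k] small[OF that(1)] small[OF that(2)] by linarith
  then show "\<exists>N. \<forall>m\<ge>N. \<forall>k\<ge>N. sqnorm (vsub (f m) (f k)) < e" by blast
qed

lemma closest_point_exists:
  assumes M: "closed_subspace M" and x: "x \<in> C"
  shows "\<exists>p\<in>M. \<forall>m\<in>M. sqnorm (vsub x p) \<le> sqnorm (vsub x m)"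
proof -
  have MC: "M \<subseteq> C" using closed_subspace_subset[OF M] .
  define d where "d = (INF m\<in>M. sqnorm (vsub x m))"
  have bdd: "bdd_below ((\<lambda>m. sqnorm (vsub x m)) ` M)"
    using MC x by (intro bdd_belowI[of _ 0]) auto
  have d_le: "d \<le> sqnorm (vsub x m)" if "m \<in> M" for m
    unfolding d_def using bdd that by (rule cINF_lower)
  have "M \<noteq> {}" using closed_subspace_zero[OF M] by blast
  then have "\<exists>m\<in>M. sqnorm (vsub x m) < d + 1 / (real k + 1)" for k
    using cINF_less_iff[OF _ bdd, of "d + 1 / (real k + 1)"] unfolding d_def by simp
  then obtain f where fM: "\<And>k. f k \<in> M" and fd: "\<And>k. sqnorm (vsub x (f k)) < d + 1 / (real k + 1)"
    by metis
  have fC: "f k \<in> C" for k using fM MC by blast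
  have "\<exists>l\<in>C. converges f l"
  proof (rule minimizing_sequence_converges[OF x fC _ fd])
    show "d \<le> sqnorm (vsub x (vscale (1/2) (vadd (f k) (f l))))" for k l
      using fM closed_subspace_add[OF M] closed_subspace_scale[OF M] by (intro d_le) blast
  qed
  then obtain p where pC: "p \<in> C" and p: "converges f p" by blast
  have "sqnorm (vsub x p) \<le> d"
  proof (rule LIMSEQ_le[OF converges_sqnorm_sub[OF p fC pC x]])
    show "(\<lambda>k. d + 1 / (real k + 1)) \<longlonglongrightarrow> d"
      using tendsto_add[OF tendsto_const LIMSEQ_inverse_real_of_nat, of d]
      by (simp add: inverse_eq_divide add.commute)
    show "\<exists>N. \<forall>k\<ge>N. sqnorm (vsub x (f k)) \<le> d + 1 / (real k + 1)"
      using fd less_imp_le by blast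
  qed
  then show ?thesis
    using closed_subspace_limit[OF M fM pC p] d_le by force
qed

lemma closest_point_orthogonal:
  assumes M: "closed_subspace M" and x: "x \<in> C" and p: "p \<in> M"
    and closest: "\<And>m. m \<in> M \<Longrightarrow> sqnorm (vsub x p) \<le> sqnorm (vsub x m)"
    and m: "m \<in> M"
  shows "vinner (vsub x p) m = 0"
proof (rule ccontr)
  assume ne: "vinner (vsub x p) m \<noteq> 0"
  have pC: "p \<in> C" and mC: "m \<in> C" using p m closed_subspace_subset[OF M] by auto
  define w where "w = vsub x p"
  have wC: "w \<in> C" using x pC w_def by simp
  have m0: "m \<noteq> vzero" using ne x pC by auto
  define t where "t = vinner w m / sqnorm m"
  have "vadd p (vscale t m) \<in> M"
    using p m closed_subspace_add[OF M] closed_subspace_scale[OF M] by blast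
  then have "sqnorm w \<le> sqnorm (vsub x (vadd p (vscale t m)))"
    unfolding w_def by (rule closest)
  also have "vsub x (vadd p (vscale t m)) = vsub w (vscale t m)"
    unfolding w_def using x pC mC by (intro vec_eqI) (simp_all add: algebra_simps)
  also have "sqnorm (vsub w (vscale t m)) = sqnorm w - (cmod (vinner w m))^2 / sqnorm m"
    unfolding t_def by (rule sqnorm_sub_component[OF wC mC m0])
  finally have "(cmod (vinner w m))^2 / sqnorm m \<le> 0" by simp
  then show False using ne sqnorm_pos[OF mC m0] w_def by (simp add: divide_le_0_iff)
qed

lemma orthogonal_projection_exists:
  assumes "closed_subspace M" "x \<in> C"
  shows "\<exists>p\<in>M. \<forall>m\<in>M. vinner (vsub x p) m = 0"
  using closest_point_exists[OF assms] closest_point_orthogonal[OF assms] by blast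

lemma kernel_closed_subspace:
  assumes add: "\<And>x y. x \<in> C \<Longrightarrow> y \<in> C \<Longrightarrow> \<phi> (vadd x y) = \<phi> x + \<phi> y"
    and scale: "\<And>a x. x \<in> C \<Longrightarrow> \<phi> (vscale a x) = a * \<phi> x"
    and bound: "\<And>x. x \<in> C \<Longrightarrow> cmod (\<phi> x) \<le> c * sqrt (sqnorm x)"
  shows "closed_subspace {x\<in>C. \<phi> x = 0}"
proof (rule closed_subspaceI)
  show "vzero \<in> {x\<in>C. \<phi> x = 0}" using scale[of vzero 0] by simp
  fix f l assume f: "\<And>k. f k \<in> {x\<in>C. \<phi> x = 0}" and l: "l \<in> C" and lim: "converges f l"
  have "cmod (\<phi> l) \<le> c * sqrt (sqnorm (vsub (f k) l))" for k
  proof -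
    have "\<phi> (vsub (f k) l) = - \<phi> l"
      using f[of k] l add scale unfolding hsub_def by simp
    then show ?thesis using bound[of "vsub (f k) l"] f[of k] l by simp
  qed
  moreover have "(\<lambda>k. c * sqrt (sqnorm (vsub (f k) l))) \<longlonglongrightarrow> c * sqrt 0"
    using lim unfolding converges_def by (intro tendsto_mult tendsto_const tendsto_real_sqrt)
  ultimately have "cmod (\<phi> l) \<le> 0" by (intro LIMSEQ_le_const) auto
  then show "l \<in> {x\<in>C. \<phi> x = 0}" using l by simp
qed (use add scale in auto)

lemma riesz_representation:
  assumes add: "\<And>x y. x \<in> C \<Longrightarrow> y \<in> C \<Longrightarrow> \<phi> (vadd x y) = \<phi> x + \<phi> y"
    and scale: "\<And>a x. x \<in> C \<Longrightarrow> \<phi> (vscale a x) = a * \<phi> x"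
    and bound: "\<And>x. x \<in> C \<Longrightarrow> cmod (\<phi> x) \<le> c * sqrt (sqnorm x)"
  shows "\<exists>z\<in>C. \<forall>x\<in>C. \<phi> x = vinner x z"
proof (cases "\<forall>x\<in>C. \<phi> x = 0")
  case True
  then show ?thesis by (intro bexI[of _ vzero]) auto
next
  case False
  then obtain x0 where x0: "x0 \<in> C" "\<phi> x0 \<noteq> 0" by blast
  define N where "N = {x\<in>C. \<phi> x = 0}"
  have sub: "\<phi> (vsub a b) = \<phi> a - \<phi> b" if "a \<in> C" "b \<in> C" for a b
    using that add scale unfolding hsub_def by simp
  obtain p where pN: "p \<in> N" and orth: "\<forall>m\<in>N. vinner (vsub x0 p) m = 0"
    using orthogonal_projection_exists[OF kernel_closed_subspace[OF assms] x0(1)] N_def by blast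
  define w where "w = vsub x0 p"
  have pC: "p \<in> C" using pN N_def by auto
  have wC: "w \<in> C" using w_def x0 pC by simp
  have \<phi>w: "\<phi> w = \<phi> x0" unfolding w_def using sub[OF x0(1) pC] pN N_def by simp
  have w0: "w \<noteq> vzero" using \<phi>w x0 scale[of vzero 0] by auto
  define z where "z = vscale (cnj (\<phi> w / sqnorm w)) w"
  have "\<phi> x = vinner x z" if x: "x \<in> C" for x
  proof -
    define u where "u = vsub (vscale (\<phi> w) x) (vscale (\<phi> x) w)"
    have "u \<in> N" unfolding u_def N_def using sub x wC scale by simp
    then have "vinner w u = 0" using orth w_def by simp
    then have "cnj (cnj (\<phi> w) * vinner w x - cnj (\<phi> x) * vinner w w) = 0"
      unfolding u_def using x wC by simp
    then have "\<phi> w * vinner x w - \<phi> x * sqnorm w = 0"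
      using vinner_commute[OF x wC] vinner_self[OF wC] by simp
    then show ?thesis
      unfolding z_def using x wC sqnorm_pos[OF wC w0] by (simp add: field_simps)
  qed
  moreover have "z \<in> C" using z_def wC by simp
  ultimately show ?thesis by blast
qed

lemma adj_eqI:
  assumes "z \<in> C" "\<And>x. x \<in> C \<Longrightarrow> vinner (T x) y = vinner x z"
  shows "adj X T y = z"
  unfolding adj_def
proof (rule the_equality)
  show "z \<in> C \<and> (\<forall>x\<in>C. vinner (T x) y = vinner x z)" using assms by auto
  fix z' assume "z' \<in> C \<and> (\<forall>x\<in>C. vinner (T x) y = vinner x z')"
  then show "z' = z" using assms by (intro vec_eqI') auto
qed

lemma bounded_op_adj:
  assumes T: "bounded_op X T" and y: "y \<in> C"
  shows "adj X T y \<in> C \<and> (\<forall>x\<in>C. vinner (T x) y = vinner x (adj X T y))"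
proof -
  have TC: "\<And>x. x \<in> C \<Longrightarrow> T x \<in> C"
    and Tadd: "\<And>x y. x \<in> C \<Longrightarrow> y \<in> C \<Longrightarrow> T (vadd x y) = vadd (T x) (T y)"
    and Tscale: "\<And>a x. x \<in> C \<Longrightarrow> T (vscale a x) = vscale a (T x)"
    using T unfolding bounded_op_def by auto
  obtain c where c: "\<And>x. x \<in> C \<Longrightarrow> hnorm X (T x) \<le> c * hnorm X x"
    using T unfolding bounded_op_def by blast
  have "\<exists>z\<in>C. \<forall>x\<in>C. vinner (T x) y = vinner x z"
  proof (rule riesz_representation[where c = "c * sqrt (sqnorm y)"])
    fix x assume x: "x \<in> C"
    have "cmod (vinner (T x) y) \<le> sqrt (sqnorm (T x)) * sqrt (sqnorm y)"
      using cauchy_schwarz_sqrt TC x y by blast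
    also have "\<dots> \<le> (c * sqrt (sqnorm x)) * sqrt (sqnorm y)"
      using c[OF x] y unfolding hnorm_eq_sqrt_sqnorm by (intro mult_right_mono) auto
    finally show "cmod (vinner (T x) y) \<le> c * sqrt (sqnorm y) * sqrt (sqnorm x)"
      by (simp add: ac_simps)
  qed (use TC Tadd Tscale y in simp_all)
  then obtain z where "z \<in> C" "\<forall>x\<in>C. vinner (T x) y = vinner x z" by blast
  moreover from this have "adj X T y = z" by (intro adj_eqI) auto
  ultimately show ?thesis by simp
qed

section \<open>Square-summable sequences and \<open>\<ell>\<^sup>2\<close>-sums\<close>

definition sq_summable :: "(nat \<Rightarrow> 'a) \<Rightarrow> bool" where
  "sq_summable F \<longleftrightarrow> (\<forall>k. F k \<in> C) \<and> (\<lambda>k. sqnorm (F k)) summable_on UNIV"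

definition l2_sqnorm :: "(nat \<Rightarrow> 'a) \<Rightarrow> real" where
  "l2_sqnorm F = infsum (\<lambda>k. sqnorm (F k)) UNIV"

lemma sq_summable_closed: "sq_summable F \<Longrightarrow> F k \<in> C"
  unfolding sq_summable_def by auto

lemma sq_summable_vinner_summable:
  assumes "sq_summable F" "sq_summable G"
  shows "(\<lambda>k. vinner (F k) (G k)) summable_on UNIV"
proof (rule abs_summable_summable)
  have "(\<lambda>k. (1/2) * (sqnorm (F k) + sqnorm (G k))) summable_on UNIV"
    using assms unfolding sq_summable_def by (intro summable_on_cmult_right summable_on_add) auto
  then show "(\<lambda>k. norm (vinner (F k) (G k))) summable_on UNIV"
    by (rule summable_on_comparison_test)
      (use assms cauchy_schwarz_mean sq_summable_closed in fastforce)+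
qed

lemma sq_summable_bound:
  assumes "sq_summable F" "\<And>k. G k \<in> C" "\<And>k. sqnorm (G k) \<le> c * sqnorm (F k)"
  shows "sq_summable G"
proof -
  have "(\<lambda>k. c * sqnorm (F k)) summable_on UNIV"
    using assms(1) unfolding sq_summable_def by (intro summable_on_cmult_right) auto
  then have "(\<lambda>k. sqnorm (G k)) summable_on UNIV"
    by (rule summable_on_comparison_test) (use assms in auto)
  then show ?thesis unfolding sq_summable_def using assms(2) by simp
qed

lemma sq_summable_reindex_bound:
  assumes inj: "inj_on g B" and G: "sq_summable G" and H: "\<And>k. H k \<in> C"
    and outside: "\<And>k. k \<notin> B \<Longrightarrow> H k = vzero"
    and le: "\<And>k. k \<in> B \<Longrightarrow> sqnorm (H k) \<le> sqnorm (G (g k))"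
  shows "sq_summable H"
proof -
  have "(\<lambda>x. sqnorm (G x)) summable_on g ` B"
    using G unfolding sq_summable_def by (auto intro: summable_on_subset_banach)
  then have "(\<lambda>k. sqnorm (G (g k))) summable_on B"
    using summable_on_reindex[OF inj, of "\<lambda>x. sqnorm (G x)"] by (simp add: comp_def)
  then have "(\<lambda>k. sqnorm (H k)) summable_on B"
    by (rule summable_on_comparison_test) (use le H in auto)
  then have "(\<lambda>k. sqnorm (H k)) summable_on UNIV"
    by (subst summable_on_cong_neutral[where g = "\<lambda>k. sqnorm (H k)" and T = B]) (auto simp: outside)
  then show ?thesis unfolding sq_summable_def using H by simp
qed

lemma sq_summable_add:
  assumes "sq_summable F" "sq_summable G"
  shows "sq_summable (\<lambda>k. vadd (F k) (G k))"
proof -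
  have "(\<lambda>k. 2 * sqnorm (F k) + 2 * sqnorm (G k)) summable_on UNIV"
    using assms unfolding sq_summable_def by (intro summable_on_add summable_on_cmult_right) auto
  then have "(\<lambda>k. sqnorm (vadd (F k) (G k))) summable_on UNIV"
    by (rule summable_on_comparison_test) (use assms sq_summable_closed sqnorm_add_le in auto)
  then show ?thesis unfolding sq_summable_def using assms sq_summable_closed by auto
qed

lemma sq_summable_scale: "sq_summable F \<Longrightarrow> sq_summable (\<lambda>k. vscale a (F k))"
  by (rule sq_summable_bound[where c = "(cmod a)^2"]) (auto simp: sq_summable_closed sqnorm_scale)

lemma sq_summable_sub:
  "sq_summable F \<Longrightarrow> sq_summable G \<Longrightarrow> sq_summable (\<lambda>k. vsub (F k) (G k))"
  unfolding hsub_def by (intro sq_summable_add sq_summable_scale)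

lemma sq_summable_zero: "sq_summable (\<lambda>k. vzero)"
  unfolding sq_summable_def by simp

lemma infsum_vinner_self:
  assumes "sq_summable F"
  shows "infsum (\<lambda>k. vinner (F k) (F k)) UNIV = of_real (l2_sqnorm F)"
proof -
  have "((\<lambda>k. sqnorm (F k)) has_sum l2_sqnorm F) UNIV"
    using assms unfolding sq_summable_def l2_sqnorm_def by (simp add: has_sum_infsum)
  then have "((\<lambda>k. vinner (F k) (F k)) has_sum of_real (l2_sqnorm F)) UNIV"
    using has_sum_of_real assms sq_summable_closed vinner_self by simp
  then show ?thesis by (rule infsumI)
qed

lemma l2_sqnorm_nonneg: "sq_summable F \<Longrightarrow> l2_sqnorm F \<ge> 0"
  unfolding l2_sqnorm_def by (intro infsum_nonneg) (auto simp: sq_summable_closed)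

lemma sum_sqnorm_le_l2_sqnorm:
  "sq_summable F \<Longrightarrow> finite B \<Longrightarrow> (\<Sum>k\<in>B. sqnorm (F k)) \<le> l2_sqnorm F"
  unfolding l2_sqnorm_def
  by (rule finite_sum_le_infsum) (auto simp: sq_summable_def sq_summable_closed)

lemma sqnorm_le_l2_sqnorm: "sq_summable F \<Longrightarrow> sqnorm (F k) \<le> l2_sqnorm F"
  using sum_sqnorm_le_l2_sqnorm[of F "{k}"] by simp

lemma l2_sqnorm_limit_le:
  assumes l: "\<And>k. l k \<in> C" and h: "\<And>q. sq_summable (h q)"
    and lim: "\<And>k. (\<lambda>q. sqnorm (h q k)) \<longlonglongrightarrow> sqnorm (l k)"
    and bound: "\<forall>\<^sub>F q in sequentially. l2_sqnorm (h q) \<le> e"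
  shows "sq_summable l" and "l2_sqnorm l \<le> e"
proof -
  have finite_sums: "(\<Sum>k\<in>B. sqnorm (l k)) \<le> e" if "finite B" for B
  proof (rule tendsto_upperbound[OF tendsto_sum[OF lim]])
    show "\<forall>\<^sub>F q in sequentially. (\<Sum>k\<in>B. sqnorm (h q k)) \<le> e"
      using bound by eventually_elim (rule order_trans[OF sum_sqnorm_le_l2_sqnorm[OF h that]])
  qed simp
  have "(\<lambda>k. sqnorm (l k)) summable_on UNIV"
    by (rule nonneg_bdd_above_summable_on) (use l finite_sums in \<open>auto intro: bdd_aboveI[of _ e]\<close>)
  then show "sq_summable l" unfolding sq_summable_def using l by simp
  show "l2_sqnorm l \<le> e" unfolding l2_sqnorm_def
    by (rule infsum_le_finite_sums) (use \<open>_ summable_on UNIV\<close> finite_sums in auto)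
qed

lemma l2_cauchy_componentwise:
  assumes f: "\<And>p. sq_summable (f p)"
    and cauchy: "\<And>e. e > 0 \<Longrightarrow> \<exists>N. \<forall>p\<ge>N. \<forall>q\<ge>N. l2_sqnorm (\<lambda>k. vsub (f p k) (f q k)) < e"
  shows "\<exists>l\<in>C. converges (\<lambda>p. f p k) l"
proof (rule cauchy_converges)
  show "f p k \<in> C" for p using f sq_summable_closed by blast
  fix e :: real assume "e > 0"
  then obtain N where N: "\<forall>p\<ge>N. \<forall>q\<ge>N. l2_sqnorm (\<lambda>k. vsub (f p k) (f q k)) < e"
    using cauchy by blast
  have "sqnorm (vsub (f p k) (f q k)) < e" if "p \<ge> N" "q \<ge> N" for p q
    using sqnorm_le_l2_sqnorm[OF sq_summable_sub[OF f[of p] f[of q]], of k] N that by fastforce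
  then show "\<exists>N. \<forall>p\<ge>N. \<forall>q\<ge>N. sqnorm (vsub (f p k) (f q k)) < e" by blast
qed

lemma l2_cauchy_converges:
  assumes f: "\<And>p. sq_summable (f p)"
    and cauchy: "\<And>e. e > 0 \<Longrightarrow> \<exists>N. \<forall>p\<ge>N. \<forall>q\<ge>N. l2_sqnorm (\<lambda>k. vsub (f p k) (f q k)) < e"
  obtains g where "\<And>k. g k \<in> C" "\<And>k. converges (\<lambda>p. f p k) (g k)" "sq_summable g"
    "(\<lambda>p. l2_sqnorm (\<lambda>k. vsub (f p k) (g k))) \<longlonglongrightarrow> 0"
proof -
  obtain g where g: "\<And>k. g k \<in> C" and lim: "\<And>k. converges (\<lambda>p. f p k) (g k)"
    using l2_cauchy_componentwise[OF assms] by metis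
  have fC: "f p k \<in> C" for p k using f sq_summable_closed by blast
  have tail: "sq_summable (\<lambda>k. vsub (f p k) (g k)) \<and> l2_sqnorm (\<lambda>k. vsub (f p k) (g k)) \<le> e"
    if "\<forall>p\<ge>N. \<forall>q\<ge>N. l2_sqnorm (\<lambda>k. vsub (f p k) (f q k)) < e" "p \<ge> N" for p N e
  proof -
    have "(\<lambda>q. sqnorm (vsub (f p k) (f q k))) \<longlonglongrightarrow> sqnorm (vsub (f p k) (g k))" for k
      using converges_sqnorm_sub[OF lim fC g fC] .
    moreover have "\<forall>\<^sub>F q in sequentially. l2_sqnorm (\<lambda>k. vsub (f p k) (f q k)) \<le> e"
      unfolding eventually_sequentially using that less_imp_le by blast
    ultimately show ?thesis
      using l2_sqnorm_limit_le[of "\<lambda>k. vsub (f p k) (g k)" "\<lambda>q k. vsub (f p k) (f q k)"]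
        fC g f sq_summable_sub by simp
  qed
  obtain N1 where "\<forall>p\<ge>N1. \<forall>q\<ge>N1. l2_sqnorm (\<lambda>k. vsub (f p k) (f q k)) < 1"
    using cauchy[of 1] by auto
  then have "sq_summable (\<lambda>k. vsub (f N1 k) (g k))"
    using tail[of N1 1 N1] by blast
  then have "sq_summable (\<lambda>k. vsub (f N1 k) (vsub (f N1 k) (g k)))"
    using f by (rule sq_summable_sub[rotated])
  moreover have "vsub (f N1 k) (vsub (f N1 k) (g k)) = g k" for k
    using fC g by (intro vec_eqI) simp_all
  ultimately have "sq_summable g" by simp
  moreover have "(\<lambda>p. l2_sqnorm (\<lambda>k. vsub (f p k) (g k))) \<longlonglongrightarrow> 0"
  proof (rule LIMSEQ_I)
    fix e :: real assume e: "e > 0"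
    then obtain N where N: "\<forall>p\<ge>N. \<forall>q\<ge>N. l2_sqnorm (\<lambda>k. vsub (f p k) (f q k)) < e / 2"
      using cauchy[of "e / 2"] by auto
    have "norm (l2_sqnorm (\<lambda>k. vsub (f p k) (g k)) - 0) < e" if "p \<ge> N" for p
      using tail[OF N that] e l2_sqnorm_nonneg by auto
    then show "\<exists>N. \<forall>p\<ge>N. norm (l2_sqnorm (\<lambda>k. vsub (f p k) (g k)) - 0) < e" by blast
  qed
  ultimately show ?thesis using that g lim by blast
qed

definition l2 :: "(nat \<Rightarrow> 'a set) \<Rightarrow> (nat \<Rightarrow> 'a) hspace" where
  "l2 M = \<lparr>hcarrier = {F. (\<forall>k. F k \<in> M k) \<and> sq_summable F}, hzero = (\<lambda>k. vzero),
     hadd = (\<lambda>F G k. vadd (F k) (G k)), hscale = (\<lambda>a F k. vscale a (F k)),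
     hinner = (\<lambda>F G. infsum (\<lambda>k. vinner (F k) (G k)) UNIV)\<rparr>"

lemma l2_simps:
  "hcarrier (l2 M) = {F. (\<forall>k. F k \<in> M k) \<and> sq_summable F}"
  "hzero (l2 M) = (\<lambda>k. vzero)"
  "hadd (l2 M) F G = (\<lambda>k. vadd (F k) (G k))"
  "hscale (l2 M) a F = (\<lambda>k. vscale a (F k))"
  "hinner (l2 M) F G = infsum (\<lambda>k. vinner (F k) (G k)) UNIV"
  by (simp_all add: l2_def)

lemma l2_hsub: "hsub (l2 M) F G = (\<lambda>k. vsub (F k) (G k))"
  by (simp add: hsub_def l2_simps)

lemma l2_hnorm: "sq_summable F \<Longrightarrow> hnorm (l2 M) F = sqrt (l2_sqnorm F)"
  unfolding hnorm_def l2_simps using infsum_vinner_self by simp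

lemma l2_vinner_add_left:
  assumes "sq_summable F" "sq_summable G" "sq_summable H"
  shows "infsum (\<lambda>k. vinner (vadd (F k) (G k)) (H k)) UNIV
    = infsum (\<lambda>k. vinner (F k) (H k)) UNIV + infsum (\<lambda>k. vinner (G k) (H k)) UNIV"
  using assms sq_summable_closed
  by (simp add: infsum_add sq_summable_vinner_summable)

lemma l2_vinner_scale_left:
  assumes "sq_summable F" "sq_summable G"
  shows "infsum (\<lambda>k. vinner (vscale a (F k)) (G k)) UNIV = a * infsum (\<lambda>k. vinner (F k) (G k)) UNIV"
  using assms sq_summable_closed
  by (simp add: infsum_cmult_right sq_summable_vinner_summable)

lemma l2_sqnorm_eq_zero:
  assumes "sq_summable F" "l2_sqnorm F = 0" shows "F = (\<lambda>k. vzero)"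
proof
  fix k
  have "sqnorm (F k) = 0"
    using sqnorm_le_l2_sqnorm[OF assms(1), of k] sqnorm_nonneg[OF sq_summable_closed[OF assms(1), of k]]
      assms(2)
    by linarith
  then show "F k = vzero" using sqnorm_eq_zero_iff sq_summable_closed[OF assms(1)] by blast
qed

lemma l2_complete:
  assumes closed: "\<And>k. closed_subspace (M k)"
    and f: "\<And>p. f p \<in> hcarrier (l2 M)"
    and cauchy: "\<And>e. e > 0 \<Longrightarrow> \<exists>N. \<forall>p\<ge>N. \<forall>q\<ge>N. hnorm (l2 M) (hsub (l2 M) (f p) (f q)) < e"
  shows "\<exists>g\<in>hcarrier (l2 M). (\<lambda>p. hnorm (l2 M) (hsub (l2 M) (f p) g)) \<longlonglongrightarrow> 0"
proof -
  have fs: "sq_summable (f p)" and fM: "f p k \<in> M k" for p k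
    using f by (auto simp: l2_simps)
  have hnorm_diff: "hnorm (l2 M) (hsub (l2 M) F G) = sqrt (l2_sqnorm (\<lambda>k. vsub (F k) (G k)))"
    if "sq_summable F" "sq_summable G" for F G
    unfolding l2_hsub using l2_hnorm[OF sq_summable_sub[OF that]] .
  have cauchy_l2: "\<exists>N. \<forall>p\<ge>N. \<forall>q\<ge>N. l2_sqnorm (\<lambda>k. vsub (f p k) (f q k)) < e"
    if e: "e > 0" for e
  proof -
    obtain N where "\<forall>p\<ge>N. \<forall>q\<ge>N. hnorm (l2 M) (hsub (l2 M) (f p) (f q)) < sqrt e"
      using cauchy[of "sqrt e"] e by auto
    then have "\<forall>p\<ge>N. \<forall>q\<ge>N. l2_sqnorm (\<lambda>k. vsub (f p k) (f q k)) < e"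
      unfolding hnorm_diff[OF fs fs] by simp
    then show ?thesis ..
  qed
  obtain g where g: "\<And>k. g k \<in> C" "\<And>k. converges (\<lambda>p. f p k) (g k)" "sq_summable g"
      and lim: "(\<lambda>p. l2_sqnorm (\<lambda>k. vsub (f p k) (g k))) \<longlonglongrightarrow> 0"
    using l2_cauchy_converges[OF fs cauchy_l2] by blast
  have "g k \<in> M k" for k
    using closed_subspace_limit[OF closed[of k], of "\<lambda>p. f p k" "g k"] fM g by blast
  then have "g \<in> hcarrier (l2 M)" using g(3) by (simp add: l2_simps)
  moreover have "(\<lambda>p. hnorm (l2 M) (hsub (l2 M) (f p) g)) \<longlonglongrightarrow> 0"
    unfolding hnorm_diff[OF fs g(3)] using tendsto_real_sqrt[OF lim] by simp
  ultimately show ?thesis by blast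
qed

lemma l2_hilbert_space:
  assumes M: "\<And>k. closed_subspace (M k)"
  shows "hilbert_space (l2 M)"
proof -
  let ?K = "hcarrier (l2 M)"
  have KC: "F \<in> ?K \<Longrightarrow> F k \<in> C" and Ks: "F \<in> ?K \<Longrightarrow> sq_summable F" for F k
    using sq_summable_closed by (auto simp: l2_simps)
  have c1: "hzero (l2 M) \<in> ?K"
    using closed_subspace_zero[OF M] sq_summable_zero by (simp add: l2_simps)
  have c2: "\<forall>F\<in>?K. \<forall>G\<in>?K. hadd (l2 M) F G \<in> ?K"
    using closed_subspace_add[OF M] sq_summable_add by (simp add: l2_simps)
  have c3: "\<forall>a. \<forall>F\<in>?K. hscale (l2 M) a F \<in> ?K"
    using closed_subspace_scale[OF M] sq_summable_scale by (simp add: l2_simps)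
  have c4: "\<forall>F\<in>?K. \<forall>G\<in>?K. \<forall>H\<in>?K. hadd (l2 M) (hadd (l2 M) F G) H = hadd (l2 M) F (hadd (l2 M) G H)"
    using KC vadd_assoc by (simp add: l2_simps)
  have c5: "\<forall>F\<in>?K. \<forall>G\<in>?K. hadd (l2 M) F G = hadd (l2 M) G F"
    using KC vadd_commute by (simp add: l2_simps)
  have c6: "\<forall>F\<in>?K. hadd (l2 M) F (hzero (l2 M)) = F"
    using KC by (simp add: l2_simps)
  have c7: "\<forall>F\<in>?K. hadd (l2 M) F (hscale (l2 M) (-1) F) = hzero (l2 M)"
    using KC vadd_neg by (simp add: l2_simps)
  have c8: "\<forall>a b. \<forall>F\<in>?K. hscale (l2 M) a (hscale (l2 M) b F) = hscale (l2 M) (a * b) F"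
    using KC by (simp add: l2_simps)
  have c9: "\<forall>F\<in>?K. hscale (l2 M) 1 F = F"
    using KC by (simp add: l2_simps)
  have c10: "\<forall>a. \<forall>F\<in>?K. \<forall>G\<in>?K. hscale (l2 M) a (hadd (l2 M) F G)
      = hadd (l2 M) (hscale (l2 M) a F) (hscale (l2 M) a G)"
    using KC vscale_vadd by (simp add: l2_simps)
  have c11: "\<forall>a b. \<forall>F\<in>?K. hscale (l2 M) (a + b) F
      = hadd (l2 M) (hscale (l2 M) a F) (hscale (l2 M) b F)"
    using KC vscale_add_left by (simp add: l2_simps)
  have c12: "\<forall>F\<in>?K. \<forall>G\<in>?K. hinner (l2 M) F G = cnj (hinner (l2 M) G F)"
  proof (intro ballI)
    fix F G assume "F \<in> ?K" "G \<in> ?K"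
    then have "(\<lambda>k. vinner (F k) (G k)) = (\<lambda>k. cnj (vinner (G k) (F k)))"
      by (intro ext vinner_commute KC)
    then show "hinner (l2 M) F G = cnj (hinner (l2 M) G F)" by (simp add: l2_simps infsum_cnj)
  qed
  have c13: "\<forall>F\<in>?K. \<forall>G\<in>?K. \<forall>H\<in>?K.
      hinner (l2 M) (hadd (l2 M) F G) H = hinner (l2 M) F H + hinner (l2 M) G H"
    using Ks l2_vinner_add_left by (simp add: l2_simps)
  have c14: "\<forall>a. \<forall>F\<in>?K. \<forall>G\<in>?K. hinner (l2 M) (hscale (l2 M) a F) G = a * hinner (l2 M) F G"
    using Ks l2_vinner_scale_left by (simp add: l2_simps)
  have c15: "\<forall>F\<in>?K. Im (hinner (l2 M) F F) = 0 \<and> Re (hinner (l2 M) F F) \<ge> 0"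
    using Ks infsum_vinner_self l2_sqnorm_nonneg by (simp add: l2_simps)
  have c16: "\<forall>F\<in>?K. hinner (l2 M) F F = 0 \<longrightarrow> F = hzero (l2 M)"
    using Ks infsum_vinner_self l2_sqnorm_eq_zero by (simp add: l2_simps)
  have c17: "\<forall>f. (\<forall>p. f p \<in> ?K) \<longrightarrow>
      (\<forall>e>0. \<exists>N. \<forall>p\<ge>N. \<forall>q\<ge>N. hnorm (l2 M) (hsub (l2 M) (f p) (f q)) < e) \<longrightarrow>
      (\<exists>g\<in>?K. (\<lambda>p. hnorm (l2 M) (hsub (l2 M) (f p) g)) \<longlonglongrightarrow> 0)"
  proof (intro allI impI)
    fix f :: "nat \<Rightarrow> nat \<Rightarrow> 'a" assume "\<forall>p. f p \<in> ?K"
      "\<forall>e>0. \<exists>N. \<forall>p\<ge>N. \<forall>q\<ge>N. hnorm (l2 M) (hsub (l2 M) (f p) (f q)) < e"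
    then show "\<exists>g\<in>?K. (\<lambda>p. hnorm (l2 M) (hsub (l2 M) (f p) g)) \<longlonglongrightarrow> 0"
      by (intro l2_complete[where M = M] M) auto
  qed
  show ?thesis unfolding hilbert_space_def Let_def
    using c1 c2 c3 c4 c5 c6 c7 c8 c9 c10 c11 c12 c13 c14 c15 c16 c17 by (intro conjI)
qed

end

section \<open>Multi-indices\<close>

locale multi_index =
  fixes n :: nat
  assumes n_pos: "n \<ge> 1"
begin

abbreviation "I \<equiv> {1..n}"

definition multi_idx :: "(nat \<Rightarrow> nat) set" where
  "multi_idx = {m. \<forall>k. k \<notin> I \<longrightarrow> m k = 0}"

lemma countable_multi_idx: "countable multi_idx"
proof -
  define f :: "nat list \<Rightarrow> nat \<Rightarrow> nat" where
    "f l = (\<lambda>k. if k \<in> I then l ! (k - 1) else 0)" for l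
  have "m = f (map m [1..<n+1])" if "m \<in> multi_idx" for m
  proof
    fix k show "m k = f (map m [1..<n+1]) k"
      using that unfolding f_def multi_idx_def
      by (cases "k \<in> I") (auto simp del: upt_Suc simp add: nth_map nth_upt)
  qed
  then have "multi_idx \<subseteq> range f" by blast
  then show ?thesis by (rule countable_subset) simp
qed

lemma infinite_multi_idx: "infinite multi_idx"
proof -
  define g :: "nat \<Rightarrow> nat \<Rightarrow> nat" where "g t = (\<lambda>k. if k = 1 then t else 0)" for t
  have "inj g"
  proof (rule injI)
    fix x y assume "g x = g y"
    then have "g x 1 = g y 1" by simp
    then show "x = y" by (simp add: g_def)
  qed
  then have "infinite (range g)" by (rule range_inj_infinite)
  moreover have "range g \<subseteq> multi_idx" unfolding g_def multi_idx_def using n_pos by auto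
  ultimately show ?thesis using infinite_super by blast
qed

text \<open>The dilation space has to consist of \<open>nat\<close>-indexed sequences, so multi-indices
  are enumerated: \<open>midx k\<close> is the multi-index of position \<open>k\<close>.\<close>
definition midx :: "nat \<Rightarrow> nat \<Rightarrow> nat" where
  "midx = from_nat_into multi_idx"

definition midx_pos :: "(nat \<Rightarrow> nat) \<Rightarrow> nat" where
  "midx_pos = inv_into UNIV midx"

lemma bij_midx: "bij_betw midx UNIV multi_idx"
  unfolding midx_def using bij_betw_from_nat_into[OF countable_multi_idx infinite_multi_idx] .

lemma midx_in: "midx k \<in> multi_idx"
  using bij_midx bij_betwE by blast

lemma inj_midx: "inj midx"
  using bij_midx bij_betw_def by blast

lemma midx_pos_midx [simp]: "midx_pos (midx k) = k"
  unfolding midx_pos_def using inj_midx by simp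

lemma midx_midx_pos [simp]: "m \<in> multi_idx \<Longrightarrow> midx (midx_pos m) = m"
  unfolding midx_pos_def by (rule bij_betw_inv_into_right[OF bij_midx])

definition inc :: "nat \<Rightarrow> (nat \<Rightarrow> nat) \<Rightarrow> nat \<Rightarrow> nat" where
  "inc i m = m(i := Suc (m i))"

definition dec :: "nat \<Rightarrow> (nat \<Rightarrow> nat) \<Rightarrow> nat \<Rightarrow> nat" where
  "dec i m = m(i := m i - 1)"

lemma inc_self [simp]: "inc i m i = Suc (m i)"
  by (simp add: inc_def)

lemma inc_other [simp]: "i \<noteq> j \<Longrightarrow> inc j m i = m i"
  by (simp add: inc_def)

lemma dec_self [simp]: "dec i m i = m i - 1"
  by (simp add: dec_def)

lemma dec_other [simp]: "i \<noteq> j \<Longrightarrow> dec j m i = m i"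
  by (simp add: dec_def)

lemma inc_dec: "m j \<noteq> 0 \<Longrightarrow> inc j (dec j m) = m"
  unfolding inc_def dec_def by auto

lemma inc_multi_idx: "i \<in> I \<Longrightarrow> m \<in> multi_idx \<Longrightarrow> inc i m \<in> multi_idx"
  unfolding inc_def multi_idx_def by auto

lemma dec_multi_idx: "i \<in> I \<Longrightarrow> m \<in> multi_idx \<Longrightarrow> dec i m \<in> multi_idx"
  unfolding dec_def multi_idx_def by auto

definition up :: "nat \<Rightarrow> nat \<Rightarrow> nat" where
  "up i k = midx_pos (inc i (midx k))"

definition down :: "nat \<Rightarrow> nat \<Rightarrow> nat" where
  "down i k = midx_pos (dec i (midx k))"

definition origin :: nat where
  "origin = midx_pos (\<lambda>_. 0)"

lemma midx_up [simp]: "i \<in> I \<Longrightarrow> midx (up i k) = inc i (midx k)"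
  unfolding up_def using inc_multi_idx midx_in by simp

lemma midx_down [simp]: "i \<in> I \<Longrightarrow> midx (down i k) = dec i (midx k)"
  unfolding down_def using dec_multi_idx midx_in by simp

lemma midx_origin [simp]: "midx origin = (\<lambda>_. 0)"
  unfolding origin_def by (simp add: multi_idx_def)

lemma down_up [simp]: "i \<in> I \<Longrightarrow> down i (up i k) = k"
  using midx_pos_midx[of k] by (simp add: down_def inc_def dec_def)

lemma up_down: "i \<in> I \<Longrightarrow> midx k i \<noteq> 0 \<Longrightarrow> up i (down i k) = k"
  using midx_pos_midx[of k] by (simp add: up_def inc_dec)

lemma inj_up: "i \<in> I \<Longrightarrow> inj (up i)"
  by (rule inj_on_inverseI[where g = "down i"]) simp

lemma inj_on_down: "i \<in> I \<Longrightarrow> inj_on (down i) {k. midx k i \<noteq> 0}"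
  by (rule inj_on_inverseI[where g = "up i"]) (simp add: up_down)

lemma up_down_commute:
  assumes "i \<in> I" "j \<in> I" "i \<noteq> j"
  shows "up j (down i k) = down i (up j k)"
proof -
  have "inc j (dec i (midx k)) = dec i (inc j (midx k))"
    unfolding inc_def dec_def using assms by (auto simp: fun_upd_twist)
  then show ?thesis using assms by (simp add: up_def down_def midx_in inc_multi_idx dec_multi_idx)
qed

lemma up_ne_origin: "i \<in> I \<Longrightarrow> up i k \<noteq> origin"
  using midx_up[of i k] midx_origin by (metis inc_self nat.distinct(1))

end

section \<open>Doubly non-commuting isometries\<close>

locale dnc_tuple = hilbert X + multi_index n for X :: "'a hspace" and n :: nat +
  fixes z :: "nat \<Rightarrow> nat \<Rightarrow> complex" and V :: "nat \<Rightarrow> 'a \<Rightarrow> 'a"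
  assumes z_unimodular: "\<And>i j. i \<in> {1..n} \<Longrightarrow> j \<in> {1..n} \<Longrightarrow> i \<noteq> j \<Longrightarrow> cmod (z i j) = 1"
    and z_swap_cnj: "\<And>i j. i \<in> {1..n} \<Longrightarrow> j \<in> {1..n} \<Longrightarrow> i \<noteq> j \<Longrightarrow> z j i = cnj (z i j)"
    and doubly_noncommuting: "doubly_noncommuting X n z V"
begin

abbreviation "Vadj i \<equiv> adj X (V i)"

lemma
  shows V_isometry [rule_format]: "\<forall>i\<in>I. isometry_op X (V i)"
    and Vadj_V_relation [rule_format]: "\<forall>i\<in>I. \<forall>j\<in>I. i \<noteq> j \<longrightarrow>
      (\<forall>x\<in>C. Vadj i (V j x) = vscale (cnj (z i j)) (V j (Vadj i x)))"
  by (insert doubly_noncommuting[unfolded doubly_noncommuting_def], (elim conjE; assumption)+)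

lemma V_bounded: "i \<in> I \<Longrightarrow> bounded_op X (V i)"
  using V_isometry unfolding isometry_op_def by simp

lemma
  assumes "i \<in> I"
  shows V_closed [simp, rule_format]: "\<forall>x\<in>C. V i x \<in> C"
    and V_add [simp, rule_format]: "\<forall>x\<in>C. \<forall>y\<in>C. V i (vadd x y) = vadd (V i x) (V i y)"
    and V_scale [simp, rule_format]: "\<forall>a. \<forall>x\<in>C. V i (vscale a x) = vscale a (V i x)"
  by (insert V_bounded[OF assms, unfolded bounded_op_def], (elim conjE; assumption)+)

lemma V_zero [simp]: "i \<in> I \<Longrightarrow> V i vzero = vzero"
  using V_scale[of i vzero 0] by simp

lemma Vadj_closed [simp]: "i \<in> I \<Longrightarrow> y \<in> C \<Longrightarrow> Vadj i y \<in> C"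
  using bounded_op_adj[OF V_bounded] by simp

lemma Vadj_adjoint: "i \<in> I \<Longrightarrow> x \<in> C \<Longrightarrow> y \<in> C \<Longrightarrow> vinner (V i x) y = vinner x (Vadj i y)"
  using bounded_op_adj[OF V_bounded] by simp

lemma Vadj_adjoint':
  assumes "i \<in> I" "x \<in> C" "y \<in> C" shows "vinner y (V i x) = vinner (Vadj i y) x"
  using Vadj_adjoint[OF assms] vinner_commute[of y "V i x"] vinner_commute[of "Vadj i y" x] assms
  by simp

lemma Vadj_V [simp]: "i \<in> I \<Longrightarrow> x \<in> C \<Longrightarrow> Vadj i (V i x) = x"
  using V_isometry unfolding isometry_op_def by simp

lemma V_vinner: "i \<in> I \<Longrightarrow> x \<in> C \<Longrightarrow> y \<in> C \<Longrightarrow> vinner (V i x) (V i y) = vinner x y"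
  using Vadj_adjoint[of i x "V i y"] by simp

lemma sqnorm_V [simp]: "i \<in> I \<Longrightarrow> x \<in> C \<Longrightarrow> sqnorm (V i x) = sqnorm x"
  unfolding sqnorm_def using V_vinner by simp

lemma Vadj_add [simp]:
  "i \<in> I \<Longrightarrow> x \<in> C \<Longrightarrow> y \<in> C \<Longrightarrow> Vadj i (vadd x y) = vadd (Vadj i x) (Vadj i y)"
  by (rule adj_eqI) (simp_all add: Vadj_adjoint)

lemma Vadj_scale [simp]: "i \<in> I \<Longrightarrow> x \<in> C \<Longrightarrow> Vadj i (vscale a x) = vscale a (Vadj i x)"
  by (rule adj_eqI) (simp_all add: Vadj_adjoint)

lemma Vadj_zero [simp]: "i \<in> I \<Longrightarrow> Vadj i vzero = vzero"
  using Vadj_scale[of i vzero 0] by simp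

lemma sqnorm_Vadj_le:
  assumes "i \<in> I" "y \<in> C" shows "sqnorm (Vadj i y) \<le> sqnorm y"
proof -
  let ?a = "sqrt (sqnorm (Vadj i y))"
  have "?a * ?a = Re (vinner (V i (Vadj i y)) y)"
    unfolding sqnorm_def using Vadj_adjoint assms vinner_self_nonneg by simp
  also have "\<dots> \<le> cmod (vinner (V i (Vadj i y)) y)" by (rule complex_Re_le_cmod)
  also have "\<dots> \<le> ?a * sqrt (sqnorm y)"
    using cauchy_schwarz_sqrt[of "V i (Vadj i y)" y] assms by simp
  finally have le: "?a * ?a \<le> ?a * sqrt (sqnorm y)" .
  show ?thesis
  proof (cases "?a = 0")
    case False
    then have "?a > 0" using assms sqnorm_nonneg[of "Vadj i y"] by (simp add: order_less_le)
    then have "?a \<le> sqrt (sqnorm y)" by (rule mult_left_le_imp_le[OF le])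
    then show ?thesis using assms by simp
  qed (use assms in simp)
qed

lemma z_nonzero: "i \<in> I \<Longrightarrow> j \<in> I \<Longrightarrow> i \<noteq> j \<Longrightarrow> z i j \<noteq> 0"
  using z_unimodular[of i j] by auto

lemma cnj_unimodular:
  assumes "cmod c = 1" shows "cnj c = 1 / c"
proof -
  have "c * cnj c = 1" using assms complex_norm_square[of c] by simp
  moreover have "c \<noteq> 0" using assms by auto
  ultimately show ?thesis by (simp add: field_simps)
qed

lemma cnj_z: "i \<in> I \<Longrightarrow> j \<in> I \<Longrightarrow> i \<noteq> j \<Longrightarrow> cnj (z i j) = 1 / z i j"
  using cnj_unimodular z_unimodular by blast

lemma z_swap: "i \<in> I \<Longrightarrow> j \<in> I \<Longrightarrow> i \<noteq> j \<Longrightarrow> z j i = 1 / z i j"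
  using z_swap_cnj[of i j] cnj_z[of i j] by simp

lemma Vadj_V_other [simp]:
  "i \<in> I \<Longrightarrow> j \<in> I \<Longrightarrow> i \<noteq> j \<Longrightarrow> x \<in> C \<Longrightarrow> Vadj i (V j x) = vscale (1 / z i j) (V j (Vadj i x))"
  using Vadj_V_relation[of i j x] cnj_z[of i j] by simp

text \<open>Expanding the squared norm of \<open>V\<^sub>i V\<^sub>j x - z\<^sub>i\<^sub>j V\<^sub>j V\<^sub>i x\<close> with the
  commutation relation gives zero.\<close>
lemma V_commute:
  assumes ij: "i \<in> I" "j \<in> I" "i \<noteq> j" and x: "x \<in> C"
  shows "V i (V j x) = vscale (z i j) (V j (V i x))"
proof -
  let ?u = "V i (V j x)" and ?w = "V j (V i x)"
  have uw: "vinner ?u ?w = z i j * vinner x x"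
  proof -
    have "vinner ?u ?w = vinner (V j x) (Vadj i ?w)" using Vadj_adjoint ij x by simp
    also have "\<dots> = vinner (V j x) (vscale (1 / z i j) (V j x))" using ij x by simp
    also have "\<dots> = cnj (1 / z i j) * vinner x x" using ij x V_vinner by simp
    also have "cnj (1 / z i j) = z i j" using cnj_z[OF ij] by (metis complex_cnj_cnj complex_cnj_divide complex_cnj_one)
    finally show ?thesis .
  qed
  have wu: "vinner ?w ?u = cnj (z i j) * vinner x x"
    using uw vinner_commute[of ?w ?u] ij x vinner_self[OF x] by simp
  have zz: "z i j * cnj (z i j) = 1" using z_unimodular[OF ij] complex_norm_square[of "z i j"] by simp
  have "vinner (vsub ?u (vscale (z i j) ?w)) (vsub ?u (vscale (z i j) ?w))
      = vinner ?u ?u - cnj (z i j) * vinner ?u ?w - z i j * vinner ?w ?u + z i j * cnj (z i j) * vinner ?w ?w"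
    using ij x by (simp add: algebra_simps)
  also have "\<dots> = 0" unfolding uw wu using ij x V_vinner zz by (simp add: algebra_simps)
  finally have "vsub ?u (vscale (z i j) ?w) = vzero" using ij x vinner_self_eq_zero by simp
  then show ?thesis using vsub_eq_zero_imp_eq ij x by simp
qed

lemma Vadj_commute:
  assumes ij: "i \<in> I" "k \<in> I" "i \<noteq> k" and w: "w \<in> C"
  shows "Vadj k (Vadj i w) = vscale (1 / z i k) (Vadj i (Vadj k w))"
proof (rule adj_eqI)
  show "vscale (1 / z i k) (Vadj i (Vadj k w)) \<in> C" using ij w by simp
  fix x assume x: "x \<in> C"
  have "vinner (V k x) (Vadj i w) = vinner (V i (V k x)) w" using Vadj_adjoint ij x w by simp
  also have "\<dots> = z i k * vinner (V k (V i x)) w" using V_commute[OF ij x] ij x w by simp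
  also have "\<dots> = z i k * vinner x (Vadj i (Vadj k w))" using Vadj_adjoint ij x w by simp
  also have "\<dots> = vinner x (vscale (1 / z i k) (Vadj i (Vadj k w)))"
    using ij x w cnj_z[OF ij] by simp
  finally show "vinner (V k x) (Vadj i w) = vinner x (vscale (1 / z i k) (Vadj i (Vadj k w)))" .
qed

definition defect :: "nat \<Rightarrow> 'a \<Rightarrow> 'a" where
  "defect i y = vsub y (V i (Vadj i y))"

lemma defect_closed [simp]: "i \<in> I \<Longrightarrow> y \<in> C \<Longrightarrow> defect i y \<in> C"
  by (simp add: defect_def)

lemma defect_add [simp]:
  "i \<in> I \<Longrightarrow> x \<in> C \<Longrightarrow> y \<in> C \<Longrightarrow> defect i (vadd x y) = vadd (defect i x) (defect i y)"
  unfolding defect_def by (intro vec_eqI) (simp_all add: algebra_simps)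

lemma defect_scale [simp]: "i \<in> I \<Longrightarrow> x \<in> C \<Longrightarrow> defect i (vscale a x) = vscale a (defect i x)"
  unfolding defect_def by (intro vec_eqI) (simp_all add: algebra_simps)

lemma Vadj_defect [simp]: "i \<in> I \<Longrightarrow> y \<in> C \<Longrightarrow> Vadj i (defect i y) = vzero"
  unfolding defect_def hsub_def by (simp add: vadd_neg)

lemma defect_zero [simp]: "i \<in> I \<Longrightarrow> defect i vzero = vzero"
  unfolding defect_def by simp

lemma defect_V [simp]: "i \<in> I \<Longrightarrow> x \<in> C \<Longrightarrow> defect i (V i x) = vzero"
  unfolding defect_def by simp

lemma defect_eq_self: "i \<in> I \<Longrightarrow> w \<in> C \<Longrightarrow> Vadj i w = vzero \<Longrightarrow> defect i w = w"
  unfolding defect_def hsub_def by simp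

lemma V_Vadj_add_defect: "i \<in> I \<Longrightarrow> y \<in> C \<Longrightarrow> vadd (V i (Vadj i y)) (defect i y) = y"
  unfolding defect_def by (intro vec_eqI) (simp_all add: algebra_simps)

lemma vinner_V_ker:
  "i \<in> I \<Longrightarrow> w \<in> C \<Longrightarrow> u \<in> C \<Longrightarrow> Vadj i w = vzero \<Longrightarrow> vinner w (V i u) = 0"
  using Vadj_adjoint' by simp

lemma vinner_defect:
  assumes "i \<in> I" "w \<in> C" "g \<in> C" "Vadj i w = vzero"
  shows "vinner w (defect i g) = vinner w g"
  unfolding defect_def using assms vinner_V_ker by simp

lemma defect_V_commute [simp]:
  assumes "i \<in> I" "j \<in> I" "i \<noteq> j" "x \<in> C"
  shows "defect i (V j x) = V j (defect i x)"
proof -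
  have "V i (vscale (1 / z i j) (V j (Vadj i x))) = V j (V i (Vadj i x))"
    using assms V_commute[of i j "Vadj i x"] z_nonzero[of i j] by simp
  then show ?thesis unfolding defect_def hsub_def using assms by simp
qed

lemma sqnorm_defect_le:
  assumes "i \<in> I" "y \<in> C" shows "sqnorm (defect i y) \<le> sqnorm y"
proof -
  have "vinner (V i (Vadj i y)) (defect i y) = 0"
    using assms vinner_V_ker vinner_commute[of "V i (Vadj i y)" "defect i y"] by simp
  then have "sqnorm y = sqnorm (V i (Vadj i y)) + sqnorm (defect i y)"
    using sqnorm_add[of "V i (Vadj i y)" "defect i y"] V_Vadj_add_defect assms by simp
  then show ?thesis using assms sqnorm_nonneg[of "V i (Vadj i y)"] by simp
qed

definition joint_ker :: "nat set \<Rightarrow> 'a set" where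
  "joint_ker S = {w \<in> C. \<forall>j\<in>S. Vadj j w = vzero}"

lemma joint_ker_carrier: "w \<in> joint_ker S \<Longrightarrow> w \<in> C"
  unfolding joint_ker_def by simp

lemma joint_ker_Vadj: "w \<in> joint_ker S \<Longrightarrow> j \<in> S \<Longrightarrow> Vadj j w = vzero"
  unfolding joint_ker_def by simp

lemma joint_ker_antimono: "S \<subseteq> S' \<Longrightarrow> w \<in> joint_ker S' \<Longrightarrow> w \<in> joint_ker S"
  unfolding joint_ker_def by auto

lemma joint_ker_empty: "joint_ker {} = C"
  unfolding joint_ker_def by simp

lemma joint_ker_closed_subspace:
  assumes "S \<subseteq> I" shows "closed_subspace (joint_ker S)"
proof (rule closed_subspaceI)
  fix f l assume f: "\<And>k. f k \<in> joint_ker S" and l: "l \<in> C" and lim: "converges f l"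
  have fC: "f k \<in> C" for k using f joint_ker_carrier by blast
  have "Vadj j l = vzero" if j: "j \<in> S" for j
  proof -
    have jI: "j \<in> I" using j assms by auto
    have "sqnorm (Vadj j l) \<le> sqnorm (vsub (f k) l)" for k
    proof -
      have "Vadj j l = vscale (-1) (Vadj j (vsub (f k) l))"
        using joint_ker_Vadj[OF f j] jI fC l unfolding hsub_def by simp
      then have "sqnorm (Vadj j l) = sqnorm (Vadj j (vsub (f k) l))" using sqnorm_scale jI fC l by simp
      also have "\<dots> \<le> sqnorm (vsub (f k) l)" using sqnorm_Vadj_le jI fC l by simp
      finally show ?thesis .
    qed
    then have "sqnorm (Vadj j l) \<le> 0"
      using lim unfolding converges_def by (intro LIMSEQ_le_const[of _ 0]) auto
    then have "sqnorm (Vadj j l) = 0" using sqnorm_nonneg[OF Vadj_closed[OF jI l]] by linarith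
    then show ?thesis using sqnorm_eq_zero_iff jI l by simp
  qed
  then show "l \<in> joint_ker S" using l joint_ker_def by simp
qed (use assms in \<open>auto simp: joint_ker_def\<close>)

lemma V_joint_ker:
  assumes "i \<in> I" "S \<subseteq> I" "i \<notin> S" "w \<in> joint_ker S"
  shows "V i w \<in> joint_ker S"
proof -
  have "w \<in> C" using assms joint_ker_carrier by blast
  moreover have "Vadj j (V i w) = vzero" if "j \<in> S" for j
    using that assms \<open>w \<in> C\<close> joint_ker_Vadj[OF assms(4) that] by (subgoal_tac "j \<noteq> i") auto
  ultimately show ?thesis unfolding joint_ker_def using assms by simp
qed

lemma Vadj_joint_ker:
  assumes "i \<in> I" "S \<subseteq> I" "i \<notin> S" "w \<in> joint_ker S"
  shows "Vadj i w \<in> joint_ker S"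
proof -
  have "w \<in> C" using assms joint_ker_carrier by blast
  moreover have "Vadj j (Vadj i w) = vzero" if "j \<in> S" for j
    using that assms \<open>w \<in> C\<close> joint_ker_Vadj[OF assms(4) that] Vadj_commute[of i j w]
    by (subgoal_tac "j \<noteq> i") auto
  ultimately show ?thesis unfolding joint_ker_def using assms by simp
qed

lemma defect_joint_ker:
  assumes "i \<in> I" "S \<subseteq> I" "w \<in> joint_ker S"
  shows "defect i w \<in> joint_ker (insert i S)"
proof -
  have wC: "w \<in> C" using assms joint_ker_carrier by blast
  have "Vadj j (defect i w) = vzero" if j: "j \<in> insert i S" for j
  proof (cases "j = i")
    case False
    then have jS: "j \<in> S" "j \<in> I" using j assms by auto
    have "Vadj j (Vadj i w) = vzero"
      using Vadj_commute[of i j w] False jS assms wC joint_ker_Vadj[OF assms(3) jS(1)] by simp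
    then have "Vadj j (V i (Vadj i w)) = vzero" using False jS assms wC by simp
    then show ?thesis
      unfolding defect_def hsub_def using jS assms wC joint_ker_Vadj[OF assms(3) jS(1)] by simp
  qed (use assms wC in simp)
  then show ?thesis unfolding joint_ker_def using assms wC by simp
qed

text \<open>Phases of \<open>U\<^sub>i\<close> at multi-index \<open>m\<close>: \<open>alpha i m\<close> weights the shifted coordinate and
  \<open>beta i m\<close> the term where \<open>V\<^sub>i\<close> acts.  Their change under a step in another direction
  (\<open>alpha_inc\<close>, \<open>beta_inc\<close>) is what makes the \<open>U\<^sub>i\<close> \<open>z\<close>-commute.\<close>
definition alpha :: "nat \<Rightarrow> (nat \<Rightarrow> nat) \<Rightarrow> complex" where
  "alpha i m = (\<Prod>k\<in>{1..<i}. z k i ^ m k)"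

definition beta :: "nat \<Rightarrow> (nat \<Rightarrow> nat) \<Rightarrow> complex" where
  "beta i m = (\<Prod>k\<in>I - {i}. z k i ^ m k)"

lemma alpha_unimodular [simp]: "i \<in> I \<Longrightarrow> cmod (alpha i m) = 1"
  unfolding alpha_def prod_norm[symmetric] by (intro prod.neutral) (auto simp: norm_power z_unimodular)

lemma beta_unimodular [simp]: "i \<in> I \<Longrightarrow> cmod (beta i m) = 1"
  unfolding beta_def prod_norm[symmetric] by (intro prod.neutral) (auto simp: norm_power z_unimodular)

lemma alpha_nonzero [simp]: "i \<in> I \<Longrightarrow> alpha i m \<noteq> 0"
  using alpha_unimodular[of i m] by (metis norm_zero zero_neq_one)

lemma beta_nonzero [simp]: "i \<in> I \<Longrightarrow> beta i m \<noteq> 0"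
  using beta_unimodular[of i m] by (metis norm_zero zero_neq_one)

lemma cnj_alpha: "i \<in> I \<Longrightarrow> cnj (alpha i m) = 1 / alpha i m"
  by (simp add: cnj_unimodular)

lemma cnj_beta: "i \<in> I \<Longrightarrow> cnj (beta i m) = 1 / beta i m"
  by (simp add: cnj_unimodular)

lemma cnj_inverse_alpha [simp]: "i \<in> I \<Longrightarrow> cnj (1 / alpha i m) = alpha i m"
  using cnj_alpha by simp

lemma cnj_inverse_beta [simp]: "i \<in> I \<Longrightarrow> cnj (1 / beta i m) = beta i m"
  using cnj_beta by simp

lemma alpha_update_self: "alpha i (m(i := t)) = alpha i m"
  unfolding alpha_def by (intro prod.cong) auto

lemma beta_update_self: "beta i (m(i := t)) = beta i m"
  unfolding beta_def by (intro prod.cong) auto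

lemma alpha_inc_self [simp]: "alpha i (inc i m) = alpha i m"
  unfolding inc_def by (rule alpha_update_self)

lemma beta_inc_self [simp]: "beta i (inc i m) = beta i m"
  unfolding inc_def by (rule beta_update_self)

lemma alpha_dec_self [simp]: "alpha i (dec i m) = alpha i m"
  unfolding dec_def by (rule alpha_update_self)

lemma beta_dec_self [simp]: "beta i (dec i m) = beta i m"
  unfolding dec_def by (rule beta_update_self)

lemma alpha_origin [simp]: "alpha i (\<lambda>_. 0) = 1"
  unfolding alpha_def by simp

lemma beta_origin [simp]: "beta i (\<lambda>_. 0) = 1"
  unfolding beta_def by simp

lemma prod_power_inc:
  assumes "finite A" "j \<in> A"
  shows "(\<Prod>k\<in>A. c k ^ inc j m k) = c j * (\<Prod>k\<in>A. c k ^ m k)"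
proof -
  have "(\<Prod>k\<in>A - {j}. c k ^ inc j m k) = (\<Prod>k\<in>A - {j}. c k ^ m k)"
    by (intro prod.cong) auto
  then show ?thesis
    using prod.remove[OF assms, of "\<lambda>k. c k ^ inc j m k"] prod.remove[OF assms, of "\<lambda>k. c k ^ m k"]
    by (simp add: mult.assoc)
qed

lemma alpha_inc:
  assumes "i \<in> I" "j \<in> I" "i \<noteq> j"
  shows "alpha i (inc j m) = alpha i m * (if j < i then z j i else 1)"
proof (cases "j < i")
  case True
  then show ?thesis
    using assms prod_power_inc[of "{1..<i}" j "\<lambda>k. z k i"] unfolding alpha_def by simp
next
  case False
  have "alpha i (inc j m) = alpha i m"
    unfolding alpha_def using False by (intro prod.cong) auto
  then show ?thesis using False by simp
qed

lemma beta_inc: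
  assumes "i \<in> I" "j \<in> I" "i \<noteq> j"
  shows "beta i (inc j m) = beta i m * z j i"
  using assms prod_power_inc[of "I - {i}" j "\<lambda>k. z k i"] unfolding beta_def by simp

lemma alpha_dec:
  assumes "i \<in> I" "j \<in> I" "i \<noteq> j" "m j \<noteq> 0"
  shows "alpha i (dec j m) = alpha i m / (if j < i then z j i else 1)"
  using alpha_inc[OF assms(1-3), of "dec j m"] inc_dec[of m j, OF assms(4)] z_nonzero assms by auto

lemma beta_dec:
  assumes "i \<in> I" "j \<in> I" "i \<noteq> j" "m j \<noteq> 0"
  shows "beta i (dec j m) = beta i m / z j i"
  using beta_inc[OF assms(1-3), of "dec j m"] inc_dec[of m j, OF assms(4)] z_nonzero[of j i] assms by auto

section \<open>The unitary extension\<close>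

definition supp :: "(nat \<Rightarrow> nat) \<Rightarrow> nat set" where
  "supp m = {j \<in> I. m j \<noteq> 0}"

lemma supp_subset: "supp m \<subseteq> I"
  unfolding supp_def by auto

definition dil :: "(nat \<Rightarrow> 'a) hspace" where
  "dil = l2 (\<lambda>k. joint_ker (supp (midx k)))"

lemma dil_hilbert_space: "hilbert_space dil"
  unfolding dil_def by (rule l2_hilbert_space) (rule joint_ker_closed_subspace[OF supp_subset])

lemma hilbert_dil: "hilbert dil"
  by (rule hilbert.intro[OF dil_hilbert_space])

lemma dil_carrier: "hcarrier dil = {F. (\<forall>k. F k \<in> joint_ker (supp (midx k))) \<and> sq_summable F}"
  unfolding dil_def l2_simps ..

lemma dil_simps:
  "hadd dil F G = (\<lambda>k. vadd (F k) (G k))"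
  "hscale dil a F = (\<lambda>k. vscale a (F k))"
  "hsub dil F G = (\<lambda>k. vsub (F k) (G k))"
  "hinner dil F G = infsum (\<lambda>k. vinner (F k) (G k)) UNIV"
  unfolding dil_def l2_simps l2_hsub by simp_all

lemma dil_closed [simp]: "F \<in> hcarrier dil \<Longrightarrow> F k \<in> C"
  using dil_carrier sq_summable_closed by auto

lemma dil_joint_ker: "F \<in> hcarrier dil \<Longrightarrow> F k \<in> joint_ker (supp (midx k))"
  using dil_carrier by auto

lemma dil_sq_summable: "F \<in> hcarrier dil \<Longrightarrow> sq_summable F"
  using dil_carrier by auto

lemma dil_Vadj_zero: "F \<in> hcarrier dil \<Longrightarrow> i \<in> I \<Longrightarrow> midx k i \<noteq> 0 \<Longrightarrow> Vadj i (F k) = vzero"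
  using dil_joint_ker joint_ker_Vadj unfolding supp_def by blast

lemma dilI: "(\<And>k. F k \<in> joint_ker (supp (midx k))) \<Longrightarrow> sq_summable F \<Longrightarrow> F \<in> hcarrier dil"
  using dil_carrier by auto

definition U_diag :: "nat \<Rightarrow> (nat \<Rightarrow> 'a) \<Rightarrow> nat \<Rightarrow> 'a" where
  "U_diag i F k = (if midx k i = 0 then vscale (beta i (midx k)) (V i (F k)) else vzero)"

definition U_shift :: "nat \<Rightarrow> (nat \<Rightarrow> 'a) \<Rightarrow> nat \<Rightarrow> 'a" where
  "U_shift i F k = vscale (alpha i (midx k)) (F (up i k))"

definition U :: "nat \<Rightarrow> (nat \<Rightarrow> 'a) \<Rightarrow> nat \<Rightarrow> 'a" where
  "U i F = (\<lambda>k. vadd (U_diag i F k) (U_shift i F k))"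

definition Uadj_diag :: "nat \<Rightarrow> (nat \<Rightarrow> 'a) \<Rightarrow> nat \<Rightarrow> 'a" where
  "Uadj_diag i G k = (if midx k i = 0 then vscale (1 / beta i (midx k)) (Vadj i (G k)) else vzero)"

definition Uadj_shift :: "nat \<Rightarrow> (nat \<Rightarrow> 'a) \<Rightarrow> nat \<Rightarrow> 'a" where
  "Uadj_shift i G k =
    (if midx k i = 0 then vzero else vscale (1 / alpha i (midx k)) (defect i (G (down i k))))"

definition Uadj :: "nat \<Rightarrow> (nat \<Rightarrow> 'a) \<Rightarrow> nat \<Rightarrow> 'a" where
  "Uadj i G = (\<lambda>k. vadd (Uadj_diag i G k) (Uadj_shift i G k))"

lemma
  assumes "i \<in> I" "F \<in> hcarrier dil"
  shows U_diag_closed [simp]: "U_diag i F k \<in> C"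
    and U_shift_closed [simp]: "U_shift i F k \<in> C"
    and U_closed [simp]: "U i F k \<in> C"
    and Uadj_diag_closed [simp]: "Uadj_diag i F k \<in> C"
    and Uadj_shift_closed [simp]: "Uadj_shift i F k \<in> C"
    and Uadj_closed [simp]: "Uadj i F k \<in> C"
  using assms by (simp_all add: U_diag_def U_shift_def U_def Uadj_diag_def Uadj_shift_def Uadj_def)

lemma sq_summable_U:
  assumes i: "i \<in> I" and F: "F \<in> hcarrier dil"
  shows "sq_summable (U_diag i F)" and "sq_summable (U_shift i F)" and "sq_summable (U i F)"
proof -
  show diag: "sq_summable (U_diag i F)"
    by (rule sq_summable_bound[OF dil_sq_summable[OF F], where c = 1])
      (use assms in \<open>simp_all add: U_diag_def sqnorm_scale\<close>)
  show shift: "sq_summable (U_shift i F)"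
    by (rule sq_summable_reindex_bound[OF inj_up[OF i] dil_sq_summable[OF F]])
      (use assms in \<open>simp_all add: U_shift_def sqnorm_scale\<close>)
  show "sq_summable (U i F)"
    unfolding U_def by (rule sq_summable_add[OF diag shift])
qed

lemma sq_summable_Uadj:
  assumes i: "i \<in> I" and G: "G \<in> hcarrier dil"
  shows "sq_summable (Uadj_diag i G)" and "sq_summable (Uadj_shift i G)" and "sq_summable (Uadj i G)"
proof -
  show diag: "sq_summable (Uadj_diag i G)"
    by (rule sq_summable_bound[OF dil_sq_summable[OF G], where c = 1])
      (use assms sqnorm_Vadj_le in \<open>simp_all add: Uadj_diag_def sqnorm_scale norm_divide\<close>)
  show shift: "sq_summable (Uadj_shift i G)"
    by (rule sq_summable_reindex_bound[OF inj_on_down[OF i] dil_sq_summable[OF G]])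
      (use assms sqnorm_defect_le in \<open>simp_all add: Uadj_shift_def sqnorm_scale norm_divide\<close>)
  show "sq_summable (Uadj i G)"
    unfolding Uadj_def by (rule sq_summable_add[OF diag shift])
qed

lemma U_dil:
  assumes i: "i \<in> I" and F: "F \<in> hcarrier dil"
  shows "U i F \<in> hcarrier dil"
proof (rule dilI[OF _ sq_summable_U(3)[OF assms]])
  fix k
  have M: "closed_subspace (joint_ker (supp (midx k)))"
    by (rule joint_ker_closed_subspace[OF supp_subset])
  have "U_diag i F k \<in> joint_ker (supp (midx k))"
  proof (cases "midx k i = 0")
    case True
    then have "V i (F k) \<in> joint_ker (supp (midx k))"
      using V_joint_ker[OF i supp_subset _ dil_joint_ker[OF F]] by (simp add: supp_def)
    then show ?thesis unfolding U_diag_def using True closed_subspace_scale[OF M] by simp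
  qed (simp add: U_diag_def closed_subspace_zero[OF M])
  moreover have "supp (midx k) \<subseteq> supp (midx (up i k))"
    unfolding supp_def using i by (auto simp: inc_def)
  then have "U_shift i F k \<in> joint_ker (supp (midx k))"
    using joint_ker_antimono dil_joint_ker[OF F] closed_subspace_scale[OF M]
    unfolding U_shift_def by blast
  ultimately show "U i F k \<in> joint_ker (supp (midx k))"
    unfolding U_def using closed_subspace_add[OF M] by simp
qed

lemma Uadj_dil:
  assumes i: "i \<in> I" and G: "G \<in> hcarrier dil"
  shows "Uadj i G \<in> hcarrier dil"
proof (rule dilI[OF _ sq_summable_Uadj(3)[OF assms]])
  fix k
  have M: "closed_subspace (joint_ker (supp (midx k)))"
    by (rule joint_ker_closed_subspace[OF supp_subset])
  have "Uadj_diag i G k \<in> joint_ker (supp (midx k))"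
  proof (cases "midx k i = 0")
    case True
    then have "Vadj i (G k) \<in> joint_ker (supp (midx k))"
      using Vadj_joint_ker[OF i supp_subset _ dil_joint_ker[OF G]] by (simp add: supp_def)
    then show ?thesis unfolding Uadj_diag_def using True closed_subspace_scale[OF M] by simp
  qed (simp add: Uadj_diag_def closed_subspace_zero[OF M])
  moreover have "Uadj_shift i G k \<in> joint_ker (supp (midx k))"
  proof (cases "midx k i = 0")
    case False
    have "supp (midx k) \<subseteq> insert i (supp (midx (down i k)))"
      unfolding supp_def using i by auto
    then have "defect i (G (down i k)) \<in> joint_ker (supp (midx k))"
      using defect_joint_ker[OF i supp_subset dil_joint_ker[OF G]] joint_ker_antimono by blast
    then show ?thesis unfolding Uadj_shift_def using False closed_subspace_scale[OF M] by simp
  qed (simp add: Uadj_shift_def closed_subspace_zero[OF M])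
  ultimately show "Uadj i G k \<in> joint_ker (supp (midx k))"
    unfolding Uadj_def using closed_subspace_add[OF M] by simp
qed

text \<open>Reindex by \<open>up i\<close>: outside its range \<open>m\<^sub>i = 0\<close> and \<open>Uadj_shift\<close> vanishes; the defect
  drops out because coordinates with \<open>m\<^sub>i \<noteq> 0\<close> lie in \<open>ker V\<^sub>i\<^sup>*\<close>.\<close>
lemma infsum_U_shift:
  assumes i: "i \<in> I" and F: "F \<in> hcarrier dil" and G: "G \<in> hcarrier dil"
  shows "infsum (\<lambda>k. vinner (U_shift i F k) (G k)) UNIV = infsum (\<lambda>k. vinner (F k) (Uadj_shift i G k)) UNIV"
proof -
  define q where "q k = vinner (F k) (Uadj_shift i G k)" for k
  have "q (up i k) = vinner (U_shift i F k) (G k)" for k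
  proof -
    have "Vadj i (F (up i k)) = vzero" using dil_Vadj_zero[OF F i] i by simp
    then have "vinner (F (up i k)) (defect i (G k)) = vinner (F (up i k)) (G k)"
      using vinner_defect i F G by simp
    then show ?thesis
      unfolding q_def Uadj_shift_def U_shift_def using i F G cnj_alpha by simp
  qed
  then have "infsum (\<lambda>k. vinner (U_shift i F k) (G k)) UNIV = infsum (q \<circ> up i) UNIV"
    by (simp add: comp_def)
  also have "\<dots> = infsum q (range (up i))"
    by (rule infsum_reindex[symmetric]) (use inj_up i in simp)
  also have "\<dots> = infsum q UNIV"
  proof (rule infsum_cong_neutral)
    fix k assume "k \<in> UNIV - range (up i)"
    then have "midx k i = 0" using up_down[OF i, of k] by (metis DiffD2 rangeI)
    then show "q k = 0" unfolding q_def Uadj_shift_def using F by simp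
  qed auto
  finally show ?thesis unfolding q_def .
qed

lemma U_adjoint_identity:
  assumes i: "i \<in> I" and F: "F \<in> hcarrier dil" and G: "G \<in> hcarrier dil"
  shows "hinner dil (U i F) G = hinner dil F (Uadj i G)"
proof -
  note summable = sq_summable_vinner_summable
  note FG = dil_sq_summable[OF F] dil_sq_summable[OF G]
  have diag: "vinner (U_diag i F k) (G k) = vinner (F k) (Uadj_diag i G k)" for k
    unfolding U_diag_def Uadj_diag_def using i F G Vadj_adjoint cnj_beta by simp
  have "hinner dil (U i F) G
      = infsum (\<lambda>k. vinner (U_diag i F k) (G k)) UNIV + infsum (\<lambda>k. vinner (U_shift i F k) (G k)) UNIV"
    unfolding dil_simps U_def using i F G
    by (simp add: infsum_add summable sq_summable_U[OF i F] FG)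
  also have "\<dots> = infsum (\<lambda>k. vinner (F k) (Uadj_diag i G k)) UNIV
      + infsum (\<lambda>k. vinner (F k) (Uadj_shift i G k)) UNIV"
    unfolding diag infsum_U_shift[OF assms] ..
  also have "\<dots> = hinner dil F (Uadj i G)"
    unfolding dil_simps Uadj_def using i F G
    by (simp add: infsum_add summable sq_summable_Uadj[OF i G] FG)
  finally show ?thesis .
qed

lemma adj_U: "i \<in> I \<Longrightarrow> G \<in> hcarrier dil \<Longrightarrow> adj dil (U i) G = Uadj i G"
  by (rule hilbert.adj_eqI[OF hilbert_dil]) (use Uadj_dil U_adjoint_identity in auto)

lemma Uadj_U:
  assumes i: "i \<in> I" and F: "F \<in> hcarrier dil"
  shows "Uadj i (U i F) = F"
proof
  fix k
  show "Uadj i (U i F) k = F k"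
  proof (cases "midx k i = 0")
    case True
    have "Vadj i (F (up i k)) = vzero" using dil_Vadj_zero[OF F i] i by simp
    then show ?thesis
      unfolding Uadj_def Uadj_diag_def Uadj_shift_def U_def U_diag_def U_shift_def
      using True i F by simp
  next
    case False
    have "defect i (F k) = F k" using defect_eq_self[OF i _ dil_Vadj_zero[OF F i False]] F by simp
    moreover have "defect i (U_diag i F (down i k)) = vzero" unfolding U_diag_def using i F by simp
    ultimately show ?thesis
      unfolding Uadj_def Uadj_diag_def Uadj_shift_def U_def U_shift_def
      using False i F up_down[OF i False] by simp
  qed
qed

lemma U_Uadj:
  assumes i: "i \<in> I" and G: "G \<in> hcarrier dil"
  shows "U i (Uadj i G) = G"
proof
  fix k
  show "U i (Uadj i G) k = G k"
  proof (cases "midx k i = 0")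
    case True
    then show ?thesis
      unfolding U_def U_diag_def U_shift_def Uadj_def Uadj_diag_def Uadj_shift_def
      using i G V_Vadj_add_defect by simp
  next
    case False
    have "defect i (G k) = G k" using defect_eq_self[OF i _ dil_Vadj_zero[OF G i False]] G by simp
    then show ?thesis
      unfolding U_def U_diag_def U_shift_def Uadj_def Uadj_diag_def Uadj_shift_def
      using False i G by simp
  qed
qed

lemma Uadj_U_other_ker:
  assumes i: "i \<in> I" and j: "j \<in> I" and ij: "i \<noteq> j" and F: "F \<in> hcarrier dil"
    and k: "midx k i = 0"
  shows "Uadj i (U j F) k = vscale (1 / z i j) (U j (Uadj i F) k)"
proof -
  have FC: "\<And>k. F k \<in> C" using F by simp
  have zn: "z i j \<noteq> 0" "z j i \<noteq> 0" using z_nonzero i j ij by auto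
  have zs: "z j i = 1 / z i j" using z_swap[OF i j ij] .
  have L: "Uadj i (U j F) k = vscale (1 / beta i (midx k)) (Vadj i (U j F k))"
    unfolding Uadj_def Uadj_diag_def Uadj_shift_def using k i j F U_dil by simp
  have H0: "Uadj i F k = vscale (1 / beta i (midx k)) (Vadj i (F k))"
    unfolding Uadj_def Uadj_diag_def Uadj_shift_def using k i FC by simp
  have H1: "Uadj i F (up j k) = vscale (1 / (beta i (midx k) * (1 / z i j))) (Vadj i (F (up j k)))"
    unfolding Uadj_def Uadj_diag_def Uadj_shift_def using k i j ij FC beta_inc[OF i j ij] zs by simp
  show ?thesis
  proof (cases "midx k j = 0")
    case True
    have R: "U j (Uadj i F) k = vadd (vscale (beta j (midx k)) (V j (Uadj i F k)))
        (vscale (alpha j (midx k)) (Uadj i F (up j k)))"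
      and UjF: "U j F k = vadd (vscale (beta j (midx k)) (V j (F k))) (vscale (alpha j (midx k)) (F (up j k)))"
      unfolding U_def U_diag_def U_shift_def using True by simp_all
    show ?thesis unfolding L R H0 H1 UjF using i j ij FC zn
      by (intro vec_eqI) (simp_all add: field_simps)
  next
    case False
    have R: "U j (Uadj i F) k = vscale (alpha j (midx k)) (Uadj i F (up j k))"
      and UjF: "U j F k = vscale (alpha j (midx k)) (F (up j k))"
      unfolding U_def U_diag_def U_shift_def using False j i F Uadj_dil by simp_all
    show ?thesis unfolding L R H1 UjF using i j ij FC zn
      by (intro vec_eqI) (simp_all add: field_simps)
  qed
qed

lemma Uadj_U_other_nonker:
  assumes i: "i \<in> I" and j: "j \<in> I" and ij: "i \<noteq> j" and F: "F \<in> hcarrier dil"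
    and k: "midx k i \<noteq> 0"
  shows "Uadj i (U j F) k = vscale (1 / z i j) (U j (Uadj i F) k)"
proof -
  have FC: "\<And>k. F k \<in> C" using F by simp
  have zn: "z i j \<noteq> 0" "z j i \<noteq> 0" using z_nonzero i j ij by auto
  have zs: "z j i = 1 / z i j" using z_swap[OF i j ij] .
  have L: "Uadj i (U j F) k = vscale (1 / alpha i (midx k)) (defect i (U j F (down i k)))"
    unfolding Uadj_def Uadj_diag_def Uadj_shift_def using k i j F U_dil by simp
  have H0: "Uadj i F k = vscale (1 / alpha i (midx k)) (defect i (F (down i k)))"
    unfolding Uadj_def Uadj_diag_def Uadj_shift_def using k i FC by simp
  have H1: "Uadj i F (up j k) = vscale (1 / (alpha i (midx k) * (if j < i then 1 / z i j else 1)))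
      (defect i (F (up j (down i k))))"
    unfolding Uadj_def Uadj_diag_def Uadj_shift_def
    using k i j ij FC alpha_inc[OF i j ij] up_down_commute[OF i j ij] zs by simp
  have alpha_down: "alpha j (midx (down i k)) = alpha j (midx k) / (if i < j then z i j else 1)"
    using alpha_dec[of j i "midx k", OF j i _ k] ij i by auto
  have beta_down: "beta j (midx (down i k)) = beta j (midx k) / z i j"
    using beta_dec[of j i "midx k", OF j i _ k] ij i by auto
  show ?thesis
  proof (cases "midx k j = 0")
    case True
    have R: "U j (Uadj i F) k = vadd (vscale (beta j (midx k)) (V j (Uadj i F k)))
        (vscale (alpha j (midx k)) (Uadj i F (up j k)))"
      and UjF: "U j F (down i k) = vadd (vscale (beta j (midx k) / z i j) (V j (F (down i k))))
        (vscale (alpha j (midx k) / (if i < j then z i j else 1)) (F (up j (down i k))))"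
      unfolding U_def U_diag_def U_shift_def using True i ij alpha_down beta_down by simp_all
    show ?thesis unfolding L R H0 H1 UjF using i j ij FC zn
      by (intro vec_eqI) (simp_all add: field_simps)
  next
    case False
    have R: "U j (Uadj i F) k = vscale (alpha j (midx k)) (Uadj i F (up j k))"
      and UjF: "U j F (down i k) = vscale (alpha j (midx k) / (if i < j then z i j else 1)) (F (up j (down i k)))"
      unfolding U_def U_diag_def U_shift_def using False i ij j F Uadj_dil alpha_down by simp_all
    show ?thesis unfolding L R H1 UjF using i j ij FC zn
      by (intro vec_eqI) (simp_all add: field_simps)
  qed
qed

lemma Uadj_U_other:
  assumes "i \<in> I" "j \<in> I" "i \<noteq> j" "F \<in> hcarrier dil"
  shows "Uadj i (U j F) = hscale dil (cnj (z i j)) (U j (Uadj i F))"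
proof
  fix k
  show "Uadj i (U j F) k = hscale dil (cnj (z i j)) (U j (Uadj i F)) k"
    using Uadj_U_other_ker[OF assms] Uadj_U_other_nonker[OF assms] cnj_z[OF assms(1-3)]
    by (cases "midx k i = 0") (simp_all add: dil_simps)
qed

lemma U_add:
  "i \<in> I \<Longrightarrow> F \<in> hcarrier dil \<Longrightarrow> G \<in> hcarrier dil \<Longrightarrow> U i (hadd dil F G) = hadd dil (U i F) (U i G)"
  unfolding dil_simps U_def U_diag_def U_shift_def
  by (intro ext vec_eqI) (auto simp: algebra_simps)

lemma U_scale: "i \<in> I \<Longrightarrow> F \<in> hcarrier dil \<Longrightarrow> U i (hscale dil a F) = hscale dil a (U i F)"
  unfolding dil_simps U_def U_diag_def U_shift_def
  by (intro ext vec_eqI) (auto simp: algebra_simps)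

lemma U_hnorm: "i \<in> I \<Longrightarrow> F \<in> hcarrier dil \<Longrightarrow> hnorm dil (U i F) = hnorm dil F"
  unfolding hnorm_def using U_adjoint_identity[OF _ _ U_dil] Uadj_U by simp

lemma U_bounded: "i \<in> I \<Longrightarrow> bounded_op dil (U i)"
  unfolding bounded_op_def using U_dil U_add U_scale U_hnorm by (metis order_refl mult_1)

lemma U_unitary: "i \<in> I \<Longrightarrow> unitary_op dil (U i)"
  unfolding unitary_op_def using U_bounded adj_U Uadj_U U_Uadj U_dil by simp

lemma U_doubly_noncommuting: "doubly_noncommuting dil n z U"
  unfolding doubly_noncommuting_def isometry_op_def
  using U_bounded adj_U Uadj_U U_dil Uadj_U_other by simp

definition incl :: "'a \<Rightarrow> nat \<Rightarrow> 'a" where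
  "incl h = (\<lambda>k. if k = origin then h else vzero)"

definition proj :: "(nat \<Rightarrow> 'a) \<Rightarrow> 'a" where
  "proj F = F origin"

lemma incl_dil:
  assumes "h \<in> C" shows "incl h \<in> hcarrier dil"
proof (rule dilI)
  show "incl h k \<in> joint_ker (supp (midx k))" for k
    unfolding incl_def using assms closed_subspace_zero[OF joint_ker_closed_subspace[OF supp_subset]]
    by (simp add: supp_def joint_ker_empty)
  have "(\<lambda>k. sqnorm (incl h k)) summable_on UNIV"
    by (rule finite_nonzero_values_imp_summable_on, rule finite_subset[of _ "{origin}"])
      (auto simp: incl_def)
  then show "sq_summable (incl h)" unfolding sq_summable_def incl_def using assms by auto
qed

lemma hinner_dil_incl: "F \<in> hcarrier dil \<Longrightarrow> h \<in> C \<Longrightarrow> hinner dil F (incl h) = vinner (F origin) h"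
  unfolding dil_simps by (subst infsum_cong_neutral[where T = "{origin}"]) (auto simp: incl_def)

lemma incl_hembedding: "hembedding X dil incl"
  unfolding hembedding_def using incl_dil hinner_dil_incl
  by (auto simp: dil_simps incl_def)

lemma proj_orth_proj: "orth_proj X dil incl proj"
  unfolding orth_proj_def proj_def
proof (intro ballI conjI)
  fix F assume F: "F \<in> hcarrier dil"
  show "F origin \<in> C" using F by simp
  have "hsub dil F (incl (F origin)) \<in> hcarrier dil"
    using hilbert.vsub_closed[OF hilbert_dil] F incl_dil by simp
  then show "hinner dil (hsub dil F (incl (F origin))) (incl h) = 0" if "h \<in> C" for h
    using hinner_dil_incl[OF _ that] F that by (simp add: dil_simps(3) incl_def)
qed

lemma U_incl: "i \<in> I \<Longrightarrow> h \<in> C \<Longrightarrow> U i (incl h) = incl (V i h)"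
  unfolding U_def U_diag_def U_shift_def incl_def using up_ne_origin by auto

lemma Vadj_eq_proj:
  assumes "i \<in> I" "h \<in> C" shows "Vadj i h = proj (adj dil (U i) (incl h))"
  using assms unfolding proj_def adj_U[OF assms(1) incl_dil[OF assms(2)]]
  by (simp add: Uadj_def Uadj_diag_def Uadj_shift_def incl_def)

end

theorem theorem6p2:
  fixes H :: "'a hspace" and n :: nat and z :: "nat \<Rightarrow> nat \<Rightarrow> complex"
    and V :: "nat \<Rightarrow> 'a \<Rightarrow> 'a"
  assumes "n \<ge> 1"
    and "\<And>i j. i \<in> {1..n} \<Longrightarrow> j \<in> {1..n} \<Longrightarrow> i \<noteq> j \<Longrightarrow> cmod (z i j) = 1"
    and "\<And>i j. i \<in> {1..n} \<Longrightarrow> j \<in> {1..n} \<Longrightarrow> i \<noteq> j \<Longrightarrow> z j i = cnj (z i j)"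
    and "hilbert_space H"
    and "doubly_noncommuting H n z V"
  shows "\<exists>(K :: (nat \<Rightarrow> 'a) hspace) J P U.
           hilbert_space K \<and> hembedding H K J \<and> orth_proj H K J P \<and>
           (\<forall>i\<in>{1..n}. unitary_op K (U i)) \<and>
           doubly_noncommuting K n z U \<and>
           (\<forall>i\<in>{1..n}. U i ` (J ` hcarrier H) \<subseteq> J ` hcarrier H) \<and>
           (\<forall>i\<in>{1..n}. \<forall>h\<in>hcarrier H. U i (J h) = J (V i h)) \<and>
           (\<forall>i\<in>{1..n}. \<forall>h\<in>hcarrier H. adj H (V i) h = P (adj K (U i) (J h)))"
proof -
  interpret dnc_tuple H n z V
    using assms by (intro dnc_tuple.intro hilbert.intro multi_index.intro dnc_tuple_axioms.intro)
  have "U i ` (incl ` hcarrier H) \<subseteq> incl ` hcarrier H" if "i \<in> I" for i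
    using U_incl[OF that] V_closed[OF that] by auto
  then show ?thesis
    using dil_hilbert_space incl_hembedding proj_orth_proj U_unitary U_doubly_noncommuting
      U_incl Vadj_eq_proj by blast
qed

end
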